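(* Let $\lambda\in P_I^+$ and $\mu\in P$ with $\mu<_\emptyset\lambda$. Then $w\mu<_\emptyset\lambda$ for every $w\in W_{I,\lambda}$.
   Context: Let $\mathfrak a$ be a Euclidean space with inner product $(\cdot,\cdot)$, $R\subset\mathfrak a^*$ a root system with Weyl group $W$, positive roots $R^+$, simple roots $\Pi$, simple reflections $S$, and Bruhat order $\le_W$ on $W$. Let $P$ be the weight lattice, $P^+$ the dominant weights, and $Q^+=\{\sum_{\alpha\in\Pi}n_\alpha\alpha: n_\alpha\in\mathbb Z_{\ge0}\}$; write $\lambda\preceq\mu$ iff $\mu-\lambda\in Q^+$. For $\lambda\in P$ let $\lambda_+$ be the unique element of $W\lambda\cap P^+$ and $\overline v(\lambda)$ the minimal length element of $W$ with $\overline v(\lambda)\lambda_+=\lambda$. Define a partial order on $P$: $\lambda\le_\emptyset\mu$ iff $\lambda_+\preceq\mu_+$ and, in case $\lambda_+=\mu_+$, $\overline v(\lambda)\le_W\overline v(\mu)$; $\lambda<_\emptyset\mu$ means $\lambda\le_\emptyset\mu$ and $\lambda\neq\mu$. Let $I\subset S$, $W_I$ the parabolic subgroup generated by $I$, $R_I^+$ its positive roots, $P_I^+=\{\lambda\in P:(\lambda,\alpha)\ge0\ \forall\alpha\in R_I^+\}$, and for $\lambda\in P_I^+$ let $W_{I,\lambda}=\{w\in W_I: w\lambda=\lambda\}$. *)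

theory Defs
  imports "HOL-Analysis.Analysis"
begin

text \<open>The Euclidean space \<open>\<frak>a\<close> is a type of class euclidean_space; its dual is identified
with it via the inner product. Elements of W are functions on this type.\<close>

definition srefl :: "'a::euclidean_space \<Rightarrow> 'a \<Rightarrow> 'a" where
  "srefl \<alpha> x = x - (2 * (x \<bullet> \<alpha>) / (\<alpha> \<bullet> \<alpha>)) *\<^sub>R \<alpha>"

definition root_system :: "'a::euclidean_space set \<Rightarrow> bool" where
  "root_system R \<longleftrightarrow> finite R \<and> 0 \<notin> R \<and> span R = UNIV \<and>
     (\<forall>\<alpha>\<in>R. \<forall>\<beta>\<in>R. srefl \<alpha> \<beta> \<in> R \<and> 2 * (\<beta> \<bullet> \<alpha>) / (\<alpha> \<bullet> \<alpha>) \<in> \<int>)"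

definition is_base :: "'a::euclidean_space set \<Rightarrow> 'a set \<Rightarrow> bool" where
  "is_base R B \<longleftrightarrow> B \<subseteq> R \<and> independent B \<and>
     (\<forall>\<beta>\<in>R. \<exists>c::'a \<Rightarrow> int. \<beta> = (\<Sum>\<alpha>\<in>B. real_of_int (c \<alpha>) *\<^sub>R \<alpha>) \<and>
        ((\<forall>\<alpha>\<in>B. c \<alpha> \<ge> 0) \<or> (\<forall>\<alpha>\<in>B. c \<alpha> \<le> 0)))"

definition Qplus :: "'a::euclidean_space set \<Rightarrow> 'a set" where
  "Qplus B = {x. \<exists>n::'a \<Rightarrow> nat. x = (\<Sum>\<alpha>\<in>B. real (n \<alpha>) *\<^sub>R \<alpha>)}"

definition pos_roots :: "'a::euclidean_space set \<Rightarrow> 'a set \<Rightarrow> 'a set" where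
  "pos_roots R B = R \<inter> Qplus B"

definition dom_le :: "'a::euclidean_space set \<Rightarrow> 'a \<Rightarrow> 'a \<Rightarrow> bool" where
  "dom_le B lam \<mu> \<longleftrightarrow> \<mu> - lam \<in> Qplus B"

definition weights :: "'a::euclidean_space set \<Rightarrow> 'a set" where
  "weights R = {lam. \<forall>\<alpha>\<in>R. 2 * (lam \<bullet> \<alpha>) / (\<alpha> \<bullet> \<alpha>) \<in> \<int>}"

definition dom_weights :: "'a::euclidean_space set \<Rightarrow> 'a set \<Rightarrow> 'a set" where
  "dom_weights R B = {lam\<in>weights R. \<forall>\<alpha>\<in>pos_roots R B. lam \<bullet> \<alpha> \<ge> 0}"

inductive_set gen_group :: "('a \<Rightarrow> 'a) set \<Rightarrow> ('a \<Rightarrow> 'a) set" for G where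
  gen_id: "id \<in> gen_group G"
| gen_step: "s \<in> G \<Longrightarrow> w \<in> gen_group G \<Longrightarrow> s \<circ> w \<in> gen_group G"

definition weyl :: "'a::euclidean_space set \<Rightarrow> ('a \<Rightarrow> 'a) set" where
  "weyl R = gen_group (srefl ` R)"

definition simple_refls :: "'a::euclidean_space set \<Rightarrow> ('a \<Rightarrow> 'a) set" where
  "simple_refls B = srefl ` B"

definition wlen :: "'a::euclidean_space set \<Rightarrow> ('a \<Rightarrow> 'a) \<Rightarrow> nat" where
  "wlen B w = (LEAST n. \<exists>ss. length ss = n \<and> set ss \<subseteq> simple_refls B \<and> w = foldr (\<circ>) ss id)"

definition bruhat_step :: "'a::euclidean_space set \<Rightarrow> 'a set \<Rightarrow> ('a \<Rightarrow> 'a) \<Rightarrow> ('a \<Rightarrow> 'a) \<Rightarrow> bool" where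
  "bruhat_step R B u w \<longleftrightarrow> (\<exists>\<alpha>\<in>R. w = srefl \<alpha> \<circ> u) \<and> wlen B u < wlen B w"

definition bruhat_le :: "'a::euclidean_space set \<Rightarrow> 'a set \<Rightarrow> ('a \<Rightarrow> 'a) \<Rightarrow> ('a \<Rightarrow> 'a) \<Rightarrow> bool" where
  "bruhat_le R B u w \<longleftrightarrow> u \<in> weyl R \<and> w \<in> weyl R \<and> (bruhat_step R B)\<^sup>*\<^sup>* u w"

definition dom_rep :: "'a::euclidean_space set \<Rightarrow> 'a set \<Rightarrow> 'a \<Rightarrow> 'a" where
  "dom_rep R B lam = (THE \<nu>. \<nu> \<in> (\<lambda>w. w lam) ` weyl R \<and> \<nu> \<in> dom_weights R B)"

definition vbar :: "'a::euclidean_space set \<Rightarrow> 'a set \<Rightarrow> 'a \<Rightarrow> ('a \<Rightarrow> 'a)" where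
  "vbar R B lam = (THE w. w \<in> weyl R \<and> w (dom_rep R B lam) = lam \<and>
      (\<forall>w'\<in>weyl R. w' (dom_rep R B lam) = lam \<longrightarrow> wlen B w \<le> wlen B w'))"

definition le_empty :: "'a::euclidean_space set \<Rightarrow> 'a set \<Rightarrow> 'a \<Rightarrow> 'a \<Rightarrow> bool" where
  "le_empty R B lam \<mu> \<longleftrightarrow> dom_le B (dom_rep R B lam) (dom_rep R B \<mu>) \<and>
     (dom_rep R B lam = dom_rep R B \<mu> \<longrightarrow> bruhat_le R B (vbar R B lam) (vbar R B \<mu>))"

definition less_empty :: "'a::euclidean_space set \<Rightarrow> 'a set \<Rightarrow> 'a \<Rightarrow> 'a \<Rightarrow> bool" where
  "less_empty R B lam \<mu> \<longleftrightarrow> le_empty R B lam \<mu> \<and> lam \<noteq> \<mu>"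

definition par_simple :: "'a::euclidean_space set \<Rightarrow> ('a \<Rightarrow> 'a) set \<Rightarrow> 'a set" where
  "par_simple B I = {\<alpha>\<in>B. srefl \<alpha> \<in> I}"

definition par_pos_roots :: "'a::euclidean_space set \<Rightarrow> 'a set \<Rightarrow> ('a \<Rightarrow> 'a) set \<Rightarrow> 'a set" where
  "par_pos_roots R B I = pos_roots R B \<inter> span (par_simple B I)"

definition par_dom_weights :: "'a::euclidean_space set \<Rightarrow> 'a set \<Rightarrow> ('a \<Rightarrow> 'a) set \<Rightarrow> 'a set" where
  "par_dom_weights R B I = {lam\<in>weights R. \<forall>\<alpha>\<in>par_pos_roots R B I. lam \<bullet> \<alpha> \<ge> 0}"

definition par_stab :: "('a \<Rightarrow> 'a) set \<Rightarrow> 'a \<Rightarrow> ('a \<Rightarrow> 'a) set" where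
  "par_stab I lam = {w\<in>gen_group I. w lam = lam}"

end

(*
  The stabiliser W_{I,lam} is generated by the simple reflections s in I with s lam = lam:
  for w in W_I fixing lam in P_I^+, every left descent s_delta of w inside I fixes lam, since
  lam pairs nonnegatively with the positive roots delta and -w^{-1} delta of R_I while w lam = lam
  makes the two pairings opposite. So it suffices to treat w = s_delta with s_delta lam = lam.

  Then s_delta mu has the same dominant representative nu as mu, so only the Bruhat part of
  mu <_0 lam needs care, when nu = lam_+. Write u = vbar(mu) and v = vbar(lam); both are minimal
  length representatives of cosets of the stabiliser of nu, and u <= v. If s_delta mu <> mu, then
  s_delta u is again a minimal representative, so vbar(s_delta mu) = s_delta u. If s_delta u < u,
  then s_delta u <= u <= v. Otherwise s_delta v > v by minimality of v, the lifting property
  gives s_delta u <= s_delta v, Deodhar's lemma writes s_delta v = v s' with s' a simple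
  reflection fixing nu, and lifting on the right gives s_delta u <= v.
*)

theory Submission
  imports Defs
begin

section \<open>Reflections\<close>

lemma linear_srefl: "linear (srefl a)"
  unfolding srefl_def
  by (auto intro!: linearI simp: algebra_simps inner_add_left add_divide_distrib
      scaleR_add_left[symmetric] simp del: scaleR_add_left)

lemma srefl_scaleR: "srefl a (c *\<^sub>R x) = c *\<^sub>R srefl a x"
  using linear_srefl linear_scale by blast

lemma srefl_uminus: "srefl a (- x) = - srefl a x"
  using linear_srefl linear_neg by blast

lemma srefl_self: "a \<noteq> 0 \<Longrightarrow> srefl a a = - a"
  by (simp add: srefl_def algebra_simps scaleR_2)

lemma srefl_orthogonal_fixed: "x \<bullet> a = 0 \<Longrightarrow> srefl a x = x"
  by (simp add: srefl_def)

lemma srefl_fixed_iff: "a \<noteq> 0 \<Longrightarrow> srefl a x = x \<longleftrightarrow> x \<bullet> a = 0"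
  by (auto simp: srefl_def)

lemma inner_srefl_root: "a \<noteq> 0 \<Longrightarrow> srefl a x \<bullet> a = - (x \<bullet> a)"
  by (simp add: srefl_def inner_diff_left algebra_simps)

lemma srefl_srefl: "a \<noteq> 0 \<Longrightarrow> srefl a (srefl a x) = x"
  by (simp add: srefl_def[of a "srefl a x"] inner_srefl_root) (simp add: srefl_def)

lemma inner_srefl_commute: "srefl a x \<bullet> y = x \<bullet> srefl a y"
  by (simp add: srefl_def inner_diff_left inner_diff_right algebra_simps inner_commute)

lemma orthogonal_transformation_srefl: "a \<noteq> 0 \<Longrightarrow> orthogonal_transformation (srefl a)"
  by (simp add: orthogonal_transformation_def linear_srefl inner_srefl_commute srefl_srefl)

lemma srefl_scaleR_root: "c \<noteq> 0 \<Longrightarrow> srefl (c *\<^sub>R a) = srefl a"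
proof
  fix x assume "c \<noteq> 0"
  then have "(2 * (x \<bullet> (c *\<^sub>R a)) / (c *\<^sub>R a \<bullet> c *\<^sub>R a)) *\<^sub>R (c *\<^sub>R a)
      = (2 * (x \<bullet> a) / (a \<bullet> a)) *\<^sub>R a"
    by (cases "a = 0") (simp_all add: field_simps power2_eq_square)
  then show "srefl (c *\<^sub>R a) x = srefl a x" by (simp add: srefl_def)
qed

lemma srefl_uminus_root: "srefl (- a) = srefl a"
  using srefl_scaleR_root[of "-1" a] by simp

lemma srefl_conjugate:
  assumes "orthogonal_transformation f"
  shows "f (srefl a x) = srefl (f a) (f x)"
  using assms unfolding srefl_def orthogonal_transformation_def
  by (simp add: linear_diff linear_scale)

lemma comp_srefl_conjugate: "orthogonal_transformation f \<Longrightarrow> f \<circ> srefl a = srefl (f a) \<circ> f"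
  by (auto simp: srefl_conjugate)

lemma srefl_srefl_conjugate: "a \<noteq> 0 \<Longrightarrow> srefl (srefl a b) = srefl a \<circ> srefl b \<circ> srefl a"
  using srefl_conjugate[OF orthogonal_transformation_srefl, of a b "srefl a y" for y]
  by (simp add: fun_eq_iff srefl_srefl)

lemma orthogonal_transformation_sgn: "orthogonal_transformation f \<Longrightarrow> f (sgn x) = sgn (f x)"
  by (simp add: sgn_div_norm orthogonal_transformation_norm orthogonal_transformation_scaleR)


definition comp_list :: "('a \<Rightarrow> 'a) list \<Rightarrow> 'a \<Rightarrow> 'a" where
  "comp_list ss = foldr (\<circ>) ss id"

lemma comp_list_Nil [simp]: "comp_list [] = id"
  and comp_list_Cons [simp]: "comp_list (s # ss) = s \<circ> comp_list ss"
  by (simp_all add: comp_list_def)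

lemma comp_list_append: "comp_list (xs @ ys) = comp_list xs \<circ> comp_list ys"
  by (induction xs) (simp_all add: comp_assoc)

lemma gen_group_comp: "w \<in> gen_group G \<Longrightarrow> v \<in> gen_group G \<Longrightarrow> w \<circ> v \<in> gen_group G"
  by (induction w rule: gen_group.induct) (auto simp: comp_assoc intro: gen_group.intros)

lemma gen_group_iff_comp_list: "w \<in> gen_group G \<longleftrightarrow> (\<exists>ss. set ss \<subseteq> G \<and> w = comp_list ss)"
proof
  assume "w \<in> gen_group G"
  then show "\<exists>ss. set ss \<subseteq> G \<and> w = comp_list ss"
  proof (induction w rule: gen_group.induct)
    case gen_id
    show ?case by (intro exI[of _ "[]"]) simp
  next
    case (gen_step s w)
    then obtain ss where "set ss \<subseteq> G" "w = comp_list ss" by blast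
    with gen_step show ?case by (intro exI[of _ "s # ss"]) simp
  qed
next
  assume "\<exists>ss. set ss \<subseteq> G \<and> w = comp_list ss"
  then obtain ss where "set ss \<subseteq> G" "w = comp_list ss" by blast
  then show "w \<in> gen_group G"
    by (induction ss arbitrary: w) (auto intro: gen_group.intros)
qed

lemma inv_comp_list:
  assumes "\<And>s. s \<in> set ss \<Longrightarrow> s \<circ> s = id"
  shows "inv (comp_list ss) = comp_list (rev ss)"
proof -
  have "comp_list (rev ss) \<circ> comp_list ss = id" if "\<And>s. s \<in> set ss \<Longrightarrow> s \<circ> s = id" for ss
    using that
  proof (induction ss)
    case (Cons s ss)
    have "comp_list (rev (s # ss)) \<circ> comp_list (s # ss) = comp_list (rev ss) \<circ> (s \<circ> s) \<circ> comp_list ss"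
      by (simp add: comp_list_append comp_assoc)
    also have "\<dots> = comp_list (rev ss) \<circ> comp_list ss"
      using Cons.prems by (metis comp_id list.set_intros(1))
    also have "\<dots> = id"
      using Cons.IH Cons.prems by (meson list.set_intros(2))
    finally show ?case .
  qed simp
  from this[of ss] this[of "rev ss"] assms show ?thesis
    by (intro inv_unique_comp) auto
qed


section \<open>Root systems with a base\<close>

locale based_root_system =
  fixes R B :: "'a::euclidean_space set"
  assumes root_system: "root_system R" and base: "is_base R B"
begin

abbreviation Pos where "Pos \<equiv> pos_roots R B"
abbreviation W where "W \<equiv> weyl R"
abbreviation S where "S \<equiv> simple_refls B"
abbreviation len where "len \<equiv> wlen B"

lemma finite_roots: "finite R"
  and zero_notin_roots: "0 \<notin> R"
  and span_roots: "span R = UNIV"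
  and srefl_closed: "\<alpha> \<in> R \<Longrightarrow> \<beta> \<in> R \<Longrightarrow> srefl \<alpha> \<beta> \<in> R"
  and cartan_integer: "\<alpha> \<in> R \<Longrightarrow> \<beta> \<in> R \<Longrightarrow> 2 * (\<beta> \<bullet> \<alpha>) / (\<alpha> \<bullet> \<alpha>) \<in> \<int>"
  using root_system by (auto simp: root_system_def)

lemma base_subset_roots: "B \<subseteq> R"
  and independent_base: "independent B"
  and root_base_coords: "\<beta> \<in> R \<Longrightarrow> \<exists>c::'a \<Rightarrow> int. \<beta> = (\<Sum>\<alpha>\<in>B. real_of_int (c \<alpha>) *\<^sub>R \<alpha>) \<and>
        ((\<forall>\<alpha>\<in>B. c \<alpha> \<ge> 0) \<or> (\<forall>\<alpha>\<in>B. c \<alpha> \<le> 0))"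
  using base by (auto simp: is_base_def)

lemma finite_base: "finite B"
  using finite_roots base_subset_roots finite_subset by blast

lemma root_nonzero: "\<alpha> \<in> R \<Longrightarrow> \<alpha> \<noteq> 0"
  using zero_notin_roots by auto

lemma base_in_roots: "\<delta> \<in> B \<Longrightarrow> \<delta> \<in> R"
  using base_subset_roots by blast

lemma base_nonzero: "\<delta> \<in> B \<Longrightarrow> \<delta> \<noteq> 0"
  using base_in_roots root_nonzero by blast

lemma uminus_root: "\<alpha> \<in> R \<Longrightarrow> - \<alpha> \<in> R"
  using srefl_closed[of \<alpha> \<alpha>] srefl_self root_nonzero by metis

lemma srefl_srefl_root [simp]: "\<alpha> \<in> R \<Longrightarrow> srefl \<alpha> (srefl \<alpha> x) = x"
  using srefl_srefl root_nonzero by blast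

lemma comp_srefl_srefl [simp]: "\<alpha> \<in> R \<Longrightarrow> w \<circ> srefl \<alpha> \<circ> srefl \<alpha> = w"
  and srefl_comp_srefl_comp [simp]: "\<alpha> \<in> R \<Longrightarrow> srefl \<alpha> \<circ> (srefl \<alpha> \<circ> w) = w"
  by (auto simp: fun_eq_iff)

lemma span_base_UNIV: "span B = UNIV"
proof -
  have "R \<subseteq> span B"
  proof
    fix \<beta> assume "\<beta> \<in> R"
    then obtain c :: "'a \<Rightarrow> int" where "\<beta> = (\<Sum>\<alpha>\<in>B. real_of_int (c \<alpha>) *\<^sub>R \<alpha>)"
      using root_base_coords by blast
    then show "\<beta> \<in> span B" by (simp add: span_sum span_scale span_base)
  qed
  then show ?thesis
    using span_roots span_minimal[of R "span B"] by auto
qed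

definition coord :: "'a \<Rightarrow> 'a \<Rightarrow> real" where
  "coord \<delta> x = representation B x \<delta>"

definition height :: "'a \<Rightarrow> real" where
  "height x = (\<Sum>\<delta>\<in>B. coord \<delta> x)"

lemma coord_diff: "coord \<delta> (x - y) = coord \<delta> x - coord \<delta> y"
  and coord_uminus: "coord \<delta> (- x) = - coord \<delta> x"
  and coord_scaleR: "coord \<delta> (c *\<^sub>R x) = c * coord \<delta> x"
  using independent_base span_base_UNIV
  by (simp_all add: coord_def representation_diff representation_neg representation_scale)

lemma coord_sum: "coord \<delta> (\<Sum>b\<in>A. f b) = (\<Sum>b\<in>A. coord \<delta> (f b))"
  using independent_base span_base_UNIV by (simp add: coord_def representation_sum)

lemma coord_base: "b \<in> B \<Longrightarrow> coord \<delta> b = (if \<delta> = b then 1 else 0)"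
  using independent_base by (simp add: coord_def representation_basis)

lemma base_expansion: "x = (\<Sum>b\<in>B. coord b x *\<^sub>R b)"
  using independent_base span_base_UNIV finite_base
  by (simp add: coord_def sum_representation_eq)

lemma coord_lincomb: "\<delta> \<in> B \<Longrightarrow> coord \<delta> (\<Sum>b\<in>B. c b *\<^sub>R b) = c \<delta>"
  using finite_base by (simp add: coord_sum coord_scaleR coord_base if_distrib sum.delta cong: if_cong)

lemma zero_if_coords_zero: "(\<And>\<delta>. \<delta> \<in> B \<Longrightarrow> coord \<delta> x = 0) \<Longrightarrow> x = 0"
  using base_expansion[of x] by simp

lemma eq_multiple_if_coords_zero:
  assumes "\<delta> \<in> B" and "\<And>\<delta>'. \<delta>' \<in> B \<Longrightarrow> \<delta>' \<noteq> \<delta> \<Longrightarrow> coord \<delta>' x = 0"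
  shows "x = coord \<delta> x *\<^sub>R \<delta>"
proof -
  have "x = (\<Sum>b\<in>B. coord b x *\<^sub>R b)" by (rule base_expansion)
  also have "\<dots> = (\<Sum>b\<in>B. if b = \<delta> then coord \<delta> x *\<^sub>R \<delta> else 0)"
    using assms(2) by (intro sum.cong) auto
  also have "\<dots> = coord \<delta> x *\<^sub>R \<delta>"
    using assms(1) finite_base by (simp add: sum.delta')
  finally show ?thesis .
qed

lemma coord_orthogonal_span:
  assumes "\<delta> \<in> B - J" and "J \<subseteq> B" and "z \<in> span J"
  shows "coord \<delta> z = 0"
  using assms independent_base real_vector.representation_ne_zero[of J z \<delta>]
  by (auto simp: coord_def representation_extend)

lemma height_diff: "height (x - y) = height x - height y"
  and height_uminus: "height (- x) = - height x"
  and height_scaleR: "height (c *\<^sub>R x) = c * height x"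
  by (simp_all add: height_def coord_diff coord_uminus coord_scaleR sum_subtractf sum_negf
      sum_distrib_left)

lemma height_sum: "height (\<Sum>b\<in>A. f b) = (\<Sum>b\<in>A. height (f b))"
  unfolding height_def coord_sum by (rule sum.swap)

lemma height_base: "b \<in> B \<Longrightarrow> height b = 1"
  using finite_base by (simp add: height_def coord_base sum.delta)

lemma inner_base_expansion: "\<nu> \<bullet> \<gamma> = (\<Sum>\<delta>\<in>B. coord \<delta> \<gamma> * (\<nu> \<bullet> \<delta>))"
proof -
  have "\<nu> \<bullet> \<gamma> = \<nu> \<bullet> (\<Sum>\<delta>\<in>B. coord \<delta> \<gamma> *\<^sub>R \<delta>)"
    by (rule arg_cong[OF base_expansion])
  then show ?thesis by (simp add: inner_sum_right)
qed

lemma linear_base_expansion: "linear f \<Longrightarrow> f \<gamma> = (\<Sum>\<delta>\<in>B. coord \<delta> \<gamma> *\<^sub>R f \<delta>)"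
  using arg_cong[OF base_expansion, of f \<gamma>] by (simp add: linear_sum linear_scale)

lemma root_coords_same_sign:
  assumes "\<gamma> \<in> R"
  shows "(\<forall>\<delta>\<in>B. coord \<delta> \<gamma> \<ge> 0) \<or> (\<forall>\<delta>\<in>B. coord \<delta> \<gamma> \<le> 0)"
proof -
  obtain c :: "'a \<Rightarrow> int" where c: "\<gamma> = (\<Sum>\<alpha>\<in>B. real_of_int (c \<alpha>) *\<^sub>R \<alpha>)"
    and sign: "(\<forall>\<alpha>\<in>B. c \<alpha> \<ge> 0) \<or> (\<forall>\<alpha>\<in>B. c \<alpha> \<le> 0)"
    using root_base_coords[OF assms] by blast
  have "\<delta> \<in> B \<Longrightarrow> coord \<delta> \<gamma> = c \<delta>" for \<delta>
    using c coord_lincomb by simp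
  with sign show ?thesis by auto
qed

lemma pos_roots_iff: "\<gamma> \<in> Pos \<longleftrightarrow> \<gamma> \<in> R \<and> (\<forall>\<delta>\<in>B. coord \<delta> \<gamma> \<ge> 0)"
proof
  assume "\<gamma> \<in> Pos"
  then obtain n :: "'a \<Rightarrow> nat" where "\<gamma> = (\<Sum>\<alpha>\<in>B. real (n \<alpha>) *\<^sub>R \<alpha>)" and "\<gamma> \<in> R"
    by (auto simp: pos_roots_def Qplus_def)
  then show "\<gamma> \<in> R \<and> (\<forall>\<delta>\<in>B. coord \<delta> \<gamma> \<ge> 0)"
    using coord_lincomb by auto
next
  assume pos: "\<gamma> \<in> R \<and> (\<forall>\<delta>\<in>B. coord \<delta> \<gamma> \<ge> 0)"
  define n :: "'a \<Rightarrow> nat" where "n \<alpha> = nat \<lfloor>coord \<alpha> \<gamma>\<rfloor>" for \<alpha>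
  have "\<gamma> = (\<Sum>\<alpha>\<in>B. real (n \<alpha>) *\<^sub>R \<alpha>)"
  proof -
    obtain c :: "'a \<Rightarrow> int" where c: "\<gamma> = (\<Sum>\<alpha>\<in>B. real_of_int (c \<alpha>) *\<^sub>R \<alpha>)"
      using root_base_coords pos by blast
    then have "\<alpha> \<in> B \<Longrightarrow> real (n \<alpha>) = c \<alpha>" for \<alpha>
      using pos coord_lincomb[of \<alpha> "\<lambda>\<alpha>. real_of_int (c \<alpha>)"] by (fastforce simp: n_def)
    then show ?thesis
      by (subst c) (auto intro: sum.cong)
  qed
  with pos show "\<gamma> \<in> Pos"
    unfolding pos_roots_def Qplus_def by blast
qed

lemma pos_root_in_roots: "\<gamma> \<in> Pos \<Longrightarrow> \<gamma> \<in> R"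
  by (simp add: pos_roots_def)

lemma pos_root_nonzero: "\<gamma> \<in> Pos \<Longrightarrow> \<gamma> \<noteq> 0"
  using pos_root_in_roots root_nonzero by blast

lemma root_pos_or_neg: "\<gamma> \<in> R \<Longrightarrow> \<gamma> \<in> Pos \<or> - \<gamma> \<in> Pos"
  using root_coords_same_sign[of \<gamma>] uminus_root[of \<gamma>] by (auto simp: pos_roots_iff coord_uminus)

lemma pos_root_has_pos_coord:
  assumes "\<gamma> \<in> Pos"
  obtains \<delta> where "\<delta> \<in> B" and "coord \<delta> \<gamma> > 0"
proof -
  have "\<not> (\<forall>\<delta>\<in>B. coord \<delta> \<gamma> = 0)"
    using zero_if_coords_zero pos_root_nonzero[OF assms] by blast
  then show ?thesis
    using assms that by (force simp: pos_roots_iff)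
qed

lemma height_pos_root: "\<gamma> \<in> Pos \<Longrightarrow> height \<gamma> > 0"
proof -
  assume \<gamma>: "\<gamma> \<in> Pos"
  then obtain \<delta> where "\<delta> \<in> B" "coord \<delta> \<gamma> > 0"
    by (rule pos_root_has_pos_coord)
  with \<gamma> show ?thesis
    unfolding height_def by (intro sum_pos2[OF finite_base]) (auto simp: pos_roots_iff)
qed

lemma uminus_pos_root_not_pos: "\<gamma> \<in> Pos \<Longrightarrow> - \<gamma> \<notin> Pos"
  using height_pos_root[of \<gamma>] height_pos_root[of "- \<gamma>"] height_uminus by force

lemma pos_root_iff_height: "\<gamma> \<in> R \<Longrightarrow> \<gamma> \<in> Pos \<longleftrightarrow> height \<gamma> > 0"
  using root_pos_or_neg height_pos_root height_uminus by force

lemma not_pos_root_iff: "\<gamma> \<in> R \<Longrightarrow> \<gamma> \<notin> Pos \<longleftrightarrow> - \<gamma> \<in> Pos"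
  using root_pos_or_neg uminus_pos_root_not_pos by blast

lemma base_pos_root: "\<delta> \<in> B \<Longrightarrow> \<delta> \<in> Pos"
  using base_subset_roots by (auto simp: pos_roots_iff coord_base)

lemma pos_root_if_coord_pos: "\<gamma> \<in> R \<Longrightarrow> \<delta> \<in> B \<Longrightarrow> coord \<delta> \<gamma> > 0 \<Longrightarrow> \<gamma> \<in> Pos"
  using root_coords_same_sign[of \<gamma>] by (auto simp: pos_roots_iff)

lemma pos_multiple_of_simple: "\<gamma> \<in> Pos \<Longrightarrow> \<delta> \<in> B \<Longrightarrow> \<gamma> = c *\<^sub>R \<delta> \<Longrightarrow> c > 0"
  using height_pos_root[of \<gamma>] height_base[of \<delta>] by (simp add: height_scaleR)

lemma srefl_root_multiple: "\<gamma> \<in> R \<Longrightarrow> \<gamma> = c *\<^sub>R \<alpha> \<Longrightarrow> srefl \<gamma> = srefl \<alpha>"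
  using root_nonzero srefl_scaleR_root by force

text \<open>\<open>srefl \<delta>\<close> changes only the \<open>\<delta>\<close>-coordinate, so a positive root with another
  positive coordinate stays positive.\<close>

lemma srefl_simple_pos_root:
  assumes \<gamma>: "\<gamma> \<in> Pos" and \<delta>: "\<delta> \<in> B" and not_multiple: "\<nexists>c. \<gamma> = c *\<^sub>R \<delta>"
  shows "srefl \<delta> \<gamma> \<in> Pos"
proof -
  obtain \<delta>' where \<delta>': "\<delta>' \<in> B" "\<delta>' \<noteq> \<delta>" "coord \<delta>' \<gamma> \<noteq> 0"
    using eq_multiple_if_coords_zero[OF \<delta>, of \<gamma>] not_multiple by blast
  then have "coord \<delta>' \<gamma> > 0"
    using \<gamma> by (force simp: pos_roots_iff)
  moreover have "coord \<delta>' (srefl \<delta> \<gamma>) = coord \<delta>' \<gamma>"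
    using \<delta>' \<delta> by (simp add: srefl_def coord_diff coord_scaleR coord_base)
  moreover have "srefl \<delta> \<gamma> \<in> R"
    using srefl_closed base_in_roots[OF \<delta>] pos_root_in_roots[OF \<gamma>] by blast
  ultimately show ?thesis
    using pos_root_if_coord_pos \<delta>' by simp
qed


section \<open>The Weyl group\<close>

lemma weyl_comp: "w \<in> W \<Longrightarrow> v \<in> W \<Longrightarrow> w \<circ> v \<in> W"
  unfolding weyl_def by (rule gen_group_comp)

lemma srefl_in_weyl: "\<alpha> \<in> R \<Longrightarrow> srefl \<alpha> \<in> W"
  unfolding weyl_def using gen_group.gen_step[OF _ gen_group.gen_id, of "srefl \<alpha>"] by simp

lemma id_in_weyl: "id \<in> W"
  unfolding weyl_def by (rule gen_group.gen_id)

lemma orthogonal_transformation_weyl: "w \<in> W \<Longrightarrow> orthogonal_transformation w"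
  unfolding weyl_def
proof (induction w rule: gen_group.induct)
  case gen_id
  show ?case by (simp add: id_def)
next
  case (gen_step s w)
  then show ?case
    using orthogonal_transformation_compose orthogonal_transformation_srefl root_nonzero by blast
qed

lemma weyl_root: "w \<in> W \<Longrightarrow> \<alpha> \<in> R \<Longrightarrow> w \<alpha> \<in> R"
  unfolding weyl_def
  by (induction w arbitrary: \<alpha> rule: gen_group.induct) (auto intro: srefl_closed)

lemma linear_weyl: "w \<in> W \<Longrightarrow> linear w"
  and inner_weyl: "w \<in> W \<Longrightarrow> w x \<bullet> w y = x \<bullet> y"
  and weyl_uminus: "w \<in> W \<Longrightarrow> w (- x) = - w x"
  using orthogonal_transformation_weyl[of w]
  by (auto simp: orthogonal_transformation_def linear_neg)

lemma bij_weyl: "w \<in> W \<Longrightarrow> bij w"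
  using orthogonal_transformation_weyl orthogonal_transformation_bij by blast

lemma inv_weyl_apply [simp]: "w \<in> W \<Longrightarrow> inv w (w x) = x"
  and weyl_apply_inv [simp]: "w \<in> W \<Longrightarrow> w (inv w x) = x"
  using bij_weyl[of w] by (simp_all add: bij_is_inj bij_is_surj surj_f_inv_f)

lemma inv_weyl_comp: "w \<in> W \<Longrightarrow> v \<in> W \<Longrightarrow> inv (w \<circ> v) = inv v \<circ> inv w"
  using bij_weyl by (simp add: o_inv_distrib)

lemma inv_inv_weyl [simp]: "w \<in> W \<Longrightarrow> inv (inv w) = w"
  using bij_weyl by (simp add: inv_inv_eq)

lemma inv_srefl_root [simp]: "\<alpha> \<in> R \<Longrightarrow> inv (srefl \<alpha>) = srefl \<alpha>"
  by (intro inv_unique_comp) (auto simp: fun_eq_iff)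

lemma inv_in_weyl: "w \<in> W \<Longrightarrow> inv w \<in> W"
  unfolding weyl_def
proof (induction w rule: gen_group.induct)
  case gen_id
  show ?case by (metis gen_group.gen_id inv_id)
next
  case (gen_step s w)
  then obtain \<alpha> where "\<alpha> \<in> R" "s = srefl \<alpha>" by blast
  with gen_step have "inv (s \<circ> w) = inv w \<circ> s"
    using inv_weyl_comp[OF srefl_in_weyl] by (simp add: weyl_def)
  moreover have "s \<in> gen_group (srefl ` R)"
    using gen_group.gen_step[OF gen_step.hyps(1) gen_group.gen_id] by simp
  ultimately show ?case
    using gen_group_comp[OF gen_step.IH] by metis
qed

lemma inner_weyl_inv: "w \<in> W \<Longrightarrow> w x \<bullet> y = x \<bullet> inv w y"
  by (metis inner_weyl weyl_apply_inv)

lemma weights_srefl: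
  assumes \<mu>: "\<mu> \<in> weights R" and \<beta>: "\<beta> \<in> R"
  shows "srefl \<beta> \<mu> \<in> weights R"
  unfolding weights_def
proof (intro CollectI ballI)
  fix \<alpha> assume "\<alpha> \<in> R"
  then have "srefl \<beta> \<alpha> \<in> R" and norm: "srefl \<beta> \<alpha> \<bullet> srefl \<beta> \<alpha> = \<alpha> \<bullet> \<alpha>"
    using srefl_closed \<beta> inner_weyl[OF srefl_in_weyl[OF \<beta>]] by auto
  then have "2 * (\<mu> \<bullet> srefl \<beta> \<alpha>) / (srefl \<beta> \<alpha> \<bullet> srefl \<beta> \<alpha>) \<in> \<int>"
    using \<mu> \<open>srefl \<beta> \<alpha> \<in> R\<close> unfolding weights_def by blast
  then show "2 * (srefl \<beta> \<mu> \<bullet> \<alpha>) / (\<alpha> \<bullet> \<alpha>) \<in> \<int>"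
    using norm by (simp add: inner_srefl_commute[of \<beta> \<mu> \<alpha>])
qed

lemma weyl_weights: "w \<in> W \<Longrightarrow> \<mu> \<in> weights R \<Longrightarrow> w \<mu> \<in> weights R"
  unfolding weyl_def
  by (induction w arbitrary: \<mu> rule: gen_group.induct) (auto intro: weights_srefl)

lemma simple_refls_iff: "s \<in> S \<longleftrightarrow> (\<exists>\<delta>\<in>B. s = srefl \<delta>)"
  by (auto simp: simple_refls_def)

lemma simple_refl_in_weyl: "s \<in> S \<Longrightarrow> s \<in> W"
  by (auto simp: simple_refls_iff intro: srefl_in_weyl base_in_roots)

lemma simple_refl_comp_self: "s \<in> S \<Longrightarrow> s \<circ> s = id"
  by (auto simp: simple_refls_iff fun_eq_iff base_in_roots)

lemma comp_list_in_weyl: "set ss \<subseteq> S \<Longrightarrow> comp_list ss \<in> W"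
  by (induction ss) (auto simp: id_in_weyl intro: weyl_comp simple_refl_in_weyl)

lemma pos_root_simple_descent:
  assumes \<beta>: "\<beta> \<in> Pos" and not_multiple: "\<forall>\<delta>\<in>B. \<nexists>c. \<beta> = c *\<^sub>R \<delta>"
  obtains \<delta> where "\<delta> \<in> B" and "srefl \<delta> \<beta> \<in> Pos" and "height (srefl \<delta> \<beta>) \<le> height \<beta> - 1"
proof -
  have coords: "\<forall>\<delta>\<in>B. coord \<delta> \<beta> \<ge> 0" and "\<beta> \<in> R"
    using \<beta> by (auto simp: pos_roots_iff)
  have "\<exists>\<delta>\<in>B. coord \<delta> \<beta> * (\<beta> \<bullet> \<delta>) > 0"
  proof (rule ccontr)
    assume "\<not> ?thesis"
    then have "(\<Sum>\<delta>\<in>B. coord \<delta> \<beta> * (\<beta> \<bullet> \<delta>)) \<le> 0"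
      by (intro sum_nonpos) (auto simp: not_less)
    moreover have "0 < \<beta> \<bullet> \<beta>"
      using pos_root_nonzero[OF \<beta>] by simp
    ultimately show False
      using inner_base_expansion[of \<beta> \<beta>] by linarith
  qed
  then obtain \<delta> where \<delta>: "\<delta> \<in> B" and "coord \<delta> \<beta> * (\<beta> \<bullet> \<delta>) > 0"
    by blast
  with coords have "\<beta> \<bullet> \<delta> > 0"
    by (force simp: zero_less_mult_iff)
  define k where "k = 2 * (\<beta> \<bullet> \<delta>) / (\<delta> \<bullet> \<delta>)"
  have "k \<in> \<int>" and "k > 0"
    using cartan_integer[OF base_in_roots[OF \<delta>] \<open>\<beta> \<in> R\<close>] \<open>\<beta> \<bullet> \<delta> > 0\<close> base_nonzero[OF \<delta>]
    by (simp_all add: k_def)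
  then have "k \<ge> 1"
    by (auto elim: Ints_cases)
  moreover have "height (srefl \<delta> \<beta>) = height \<beta> - k"
    using \<delta> by (simp add: srefl_def k_def height_diff height_scaleR height_base)
  moreover have "srefl \<delta> \<beta> \<in> Pos"
    using srefl_simple_pos_root[OF \<beta> \<delta>] not_multiple \<delta> by blast
  ultimately show ?thesis
    using that \<delta> by simp
qed

lemma srefl_odd_simple_word:
  assumes "\<beta> \<in> R"
  shows "\<exists>ss. set ss \<subseteq> S \<and> odd (length ss) \<and> srefl \<beta> = comp_list ss"
proof -
  have "\<exists>ss. set ss \<subseteq> S \<and> odd (length ss) \<and> srefl \<beta> = comp_list ss" if "\<beta> \<in> Pos" for \<beta>
    using that
  proof (induction "nat \<lfloor>height \<beta>\<rfloor>" arbitrary: \<beta> rule: less_induct)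
    case less
    show ?case
    proof (cases "\<exists>\<delta>\<in>B. \<exists>c. \<beta> = c *\<^sub>R \<delta>")
      case True
      then obtain \<delta> c where "\<delta> \<in> B" "\<beta> = c *\<^sub>R \<delta>"
        by blast
      then have "\<delta> \<in> B" "srefl \<beta> = srefl \<delta>"
        using srefl_root_multiple pos_root_in_roots[OF less.prems] by auto
      then show ?thesis
        by (intro exI[of _ "[srefl \<delta>]"]) (auto simp: simple_refls_def)
    next
      case False
      then obtain \<delta> where \<delta>: "\<delta> \<in> B" and pos: "srefl \<delta> \<beta> \<in> Pos"
        and "height (srefl \<delta> \<beta>) \<le> height \<beta> - 1"
        using pos_root_simple_descent[OF less.prems] by blast
      then have "nat \<lfloor>height (srefl \<delta> \<beta>)\<rfloor> < nat \<lfloor>height \<beta>\<rfloor>"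
        using height_pos_root[OF pos] by linarith
      then obtain ss where ss: "set ss \<subseteq> S" "odd (length ss)" "srefl (srefl \<delta> \<beta>) = comp_list ss"
        using less.hyps pos by blast
      have "srefl \<beta> = srefl \<delta> \<circ> srefl (srefl \<delta> \<beta>) \<circ> srefl \<delta>"
        using srefl_srefl_conjugate[OF base_nonzero[OF \<delta>], of \<beta>] base_in_roots[OF \<delta>]
        by (simp add: fun_eq_iff)
      then have "srefl \<beta> = comp_list ([srefl \<delta>] @ ss @ [srefl \<delta>])"
        using ss by (simp add: comp_list_append comp_assoc)
      then show ?thesis
        using ss \<delta> by (intro exI[of _ "[srefl \<delta>] @ ss @ [srefl \<delta>]"]) (auto simp: simple_refls_def)
    qed
  qed
  then show ?thesis
    using root_pos_or_neg[OF assms] srefl_uminus_root[of \<beta>] by metis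
qed

lemma weyl_simple_word: "w \<in> W \<Longrightarrow> \<exists>ss. set ss \<subseteq> S \<and> w = comp_list ss"
  unfolding weyl_def
proof (induction w rule: gen_group.induct)
  case gen_id
  show ?case by (intro exI[of _ "[]"]) simp
next
  case (gen_step s w)
  then obtain ss ts where "set ss \<subseteq> S" "w = comp_list ss" "set ts \<subseteq> S" "s = comp_list ts"
    using srefl_odd_simple_word by blast
  then show ?case
    by (intro exI[of _ "ts @ ss"]) (simp add: comp_list_append)
qed

lemma gen_group_simple_subset_weyl: "I \<subseteq> S \<Longrightarrow> gen_group I \<subseteq> W"
  using comp_list_in_weyl by (auto simp: gen_group_iff_comp_list)


section \<open>Length\<close>

lemma reduced_word:
  assumes "w \<in> W"
  obtains ss where "set ss \<subseteq> S" and "length ss = len w" and "w = comp_list ss"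
proof -
  let ?P = "\<lambda>n. \<exists>ss. length ss = n \<and> set ss \<subseteq> S \<and> w = foldr (\<circ>) ss id"
  obtain ss where "set ss \<subseteq> S" "w = comp_list ss"
    using weyl_simple_word[OF assms] by blast
  then have "?P (length ss)"
    by (auto simp: comp_list_def)
  then have "?P (Least ?P)"
    by (rule LeastI)
  then show ?thesis
    using that unfolding wlen_def comp_list_def by blast
qed

lemma length_le_word: "set ss \<subseteq> S \<Longrightarrow> len (comp_list ss) \<le> length ss"
  unfolding wlen_def comp_list_def by (rule Least_le) blast

lemma length_zero_imp_id: "w \<in> W \<Longrightarrow> len w = 0 \<Longrightarrow> w = id"
  by (erule reduced_word) simp

lemma length_inv_le: "w \<in> W \<Longrightarrow> len (inv w) \<le> len w"
proof (erule reduced_word)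
  fix ss assume ss: "set ss \<subseteq> S" "length ss = len w" "w = comp_list ss"
  then have "inv w = comp_list (rev ss)"
    using inv_comp_list simple_refl_comp_self by blast
  then show "len (inv w) \<le> len w"
    using length_le_word[of "rev ss"] ss by simp
qed

lemma length_inv: "w \<in> W \<Longrightarrow> len (inv w) = len w"
  using length_inv_le[of w] length_inv_le[OF inv_in_weyl, of w] by simp

lemma length_comp_le:
  assumes "w \<in> W" and "v \<in> W"
  shows "len (w \<circ> v) \<le> len w + len v"
proof -
  obtain ss ts where "set ss \<subseteq> S" "length ss = len w" "w = comp_list ss"
    and "set ts \<subseteq> S" "length ts = len v" "v = comp_list ts"
    using reduced_word assms by metis
  then show ?thesis
    using length_le_word[of "ss @ ts"] by (simp add: comp_list_append)
qed

lemma length_simple_le: "\<delta> \<in> B \<Longrightarrow> len (srefl \<delta>) \<le> 1"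
  using length_le_word[of "[srefl \<delta>]"] by (simp add: simple_refls_def)

lemma length_le_comp_simple:
  assumes w: "w \<in> W" and \<delta>: "\<delta> \<in> B"
  shows "len w \<le> len (w \<circ> srefl \<delta>) + 1"
proof -
  have "len (w \<circ> srefl \<delta> \<circ> srefl \<delta>) \<le> len (w \<circ> srefl \<delta>) + len (srefl \<delta>)"
    using length_comp_le weyl_comp w srefl_in_weyl base_in_roots \<delta> by blast
  then show ?thesis
    using length_simple_le[OF \<delta>] base_in_roots[OF \<delta>] by simp
qed

lemma length_srefl_comp_eq:
  "w \<in> W \<Longrightarrow> \<alpha> \<in> R \<Longrightarrow> len (srefl \<alpha> \<circ> w) = len (inv w \<circ> srefl \<alpha>)"
  using length_inv[OF weyl_comp[OF srefl_in_weyl]] inv_weyl_comp[OF srefl_in_weyl] by simp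

lemma exists_right_descent:
  assumes w: "w \<in> W" and "len w > 0"
  obtains \<delta> where "\<delta> \<in> B" and "len (w \<circ> srefl \<delta>) < len w"
proof -
  obtain ss where ss: "set ss \<subseteq> S" "length ss = len w" "w = comp_list ss"
    using reduced_word[OF w] .
  with \<open>len w > 0\<close> obtain ts s where ts: "ss = ts @ [s]"
    by (metis length_greater_0_conv rev_exhaust)
  with ss obtain \<delta> where \<delta>: "\<delta> \<in> B" "s = srefl \<delta>"
    by (auto simp: simple_refls_def)
  with ss ts base_in_roots have "w \<circ> srefl \<delta> = comp_list ts"
    by (simp add: comp_list_append comp_assoc[symmetric])
  then have "len (w \<circ> srefl \<delta>) < len w"
    using length_le_word[of ts] ss ts by simp
  with \<delta> show ?thesis using that by blast
qed

lemma exists_left_descent: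
  assumes w: "w \<in> W" and "len w > 0"
  obtains \<delta> where "\<delta> \<in> B" and "len (srefl \<delta> \<circ> w) < len w"
proof -
  obtain \<delta> where "\<delta> \<in> B" "len (inv w \<circ> srefl \<delta>) < len (inv w)"
    using exists_right_descent[OF inv_in_weyl[OF w]] assms length_inv[OF w] by auto
  then show ?thesis
    using that length_srefl_comp_eq[OF w base_in_roots] length_inv[OF w] by auto
qed

lemma deletion_condition:
  assumes "set ss \<subseteq> S" and \<delta>: "\<delta> \<in> B" and "comp_list ss \<delta> \<notin> Pos"
  shows "\<exists>ts. set ts \<subseteq> S \<and> length ts < length ss \<and> comp_list ss \<circ> srefl \<delta> = comp_list ts"
  using assms(1,3)
proof (induction ss)
  case Nil
  then show ?case using base_pos_root[OF \<delta>] by simp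
next
  case (Cons s ss)
  obtain \<alpha> where \<alpha>: "\<alpha> \<in> B" "s = srefl \<alpha>"
    using Cons.prems by (auto simp: simple_refls_def)
  have ss: "set ss \<subseteq> S"
    using Cons.prems by simp
  show ?case
  proof (cases "comp_list ss \<delta> \<in> Pos")
    case False
    then obtain ts where "set ts \<subseteq> S" "length ts < length ss" "comp_list ss \<circ> srefl \<delta> = comp_list ts"
      using Cons.IH[OF ss] by blast
    moreover from this have "comp_list (s # ss) \<circ> srefl \<delta> = comp_list (s # ts)"
      by (metis comp_assoc comp_list_Cons)
    moreover have "set (s # ts) \<subseteq> S"
      using Cons.prems \<open>set ts \<subseteq> S\<close> by simp
    ultimately show ?thesis
      by (metis Suc_mono length_Cons)
  next
    case True
    let ?v = "comp_list ss"
    have v: "?v \<in> W"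
      using comp_list_in_weyl[OF ss] .
    from Cons.prems \<alpha> have "srefl \<alpha> (?v \<delta>) \<notin> Pos"
      by simp
    then obtain c where "?v \<delta> = c *\<^sub>R \<alpha>"
      using srefl_simple_pos_root[OF True \<alpha>(1)] by blast
    then have "srefl (?v \<delta>) = s"
      using srefl_root_multiple pos_root_in_roots[OF True] \<alpha> by simp
    then have "comp_list (s # ss) \<circ> srefl \<delta> = s \<circ> s \<circ> ?v"
      using comp_srefl_conjugate[OF orthogonal_transformation_weyl[OF v]] by (simp add: comp_assoc)
    also have "\<dots> = ?v"
      using simple_refl_comp_self Cons.prems by simp
    finally show ?thesis
      using ss by (metis lessI length_Cons)
  qed
qed

lemma length_comp_simple_less:
  assumes w: "w \<in> W" and \<delta>: "\<delta> \<in> B" and "w \<delta> \<notin> Pos"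
  shows "len (w \<circ> srefl \<delta>) < len w"
proof -
  obtain ss where ss: "set ss \<subseteq> S" "length ss = len w" "w = comp_list ss"
    using reduced_word[OF w] .
  then obtain ts where "set ts \<subseteq> S" "length ts < length ss" "w \<circ> srefl \<delta> = comp_list ts"
    using deletion_condition[OF ss(1) \<delta>] assms by blast
  then show ?thesis
    using length_le_word[of ts] ss by simp
qed

lemma length_comp_simple_greater:
  assumes w: "w \<in> W" and \<delta>: "\<delta> \<in> B" and "w \<delta> \<in> Pos"
  shows "len w < len (w \<circ> srefl \<delta>)"
proof -
  have "(w \<circ> srefl \<delta>) \<delta> = - w \<delta>"
    using srefl_self[OF base_nonzero[OF \<delta>]] weyl_uminus[OF w] by simp
  then have "(w \<circ> srefl \<delta>) \<delta> \<notin> Pos"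
    using uminus_pos_root_not_pos assms by simp
  then show ?thesis
    using length_comp_simple_less[OF weyl_comp[OF w srefl_in_weyl] \<delta>] base_in_roots[OF \<delta>]
    by fastforce
qed

lemma length_comp_simple_less_iff:
  "w \<in> W \<Longrightarrow> \<delta> \<in> B \<Longrightarrow> len (w \<circ> srefl \<delta>) < len w \<longleftrightarrow> w \<delta> \<notin> Pos"
  using length_comp_simple_less length_comp_simple_greater by fastforce

lemma length_simple_comp_less_iff:
  "w \<in> W \<Longrightarrow> \<delta> \<in> B \<Longrightarrow> len (srefl \<delta> \<circ> w) < len w \<longleftrightarrow> inv w \<delta> \<notin> Pos"
  using length_comp_simple_less_iff[OF inv_in_weyl] length_srefl_comp_eq[OF _ base_in_roots]
    length_inv by simp

lemma length_simple_comp_greater_iff: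
  "w \<in> W \<Longrightarrow> \<delta> \<in> B \<Longrightarrow> len w < len (srefl \<delta> \<circ> w) \<longleftrightarrow> inv w \<delta> \<in> Pos"
  using length_comp_simple_less[OF inv_in_weyl] length_comp_simple_greater[OF inv_in_weyl]
    length_srefl_comp_eq[OF _ base_in_roots] length_inv by fastforce

lemma weyl_eq_id_if_pos_roots_preserved:
  assumes z: "z \<in> W" and pos: "\<And>\<gamma>. \<gamma> \<in> Pos \<Longrightarrow> z \<gamma> \<in> Pos"
  shows "z = id"
proof (rule ccontr)
  assume "z \<noteq> id"
  then have "len z > 0"
    using length_zero_imp_id[OF z] by auto
  then obtain \<delta> where "\<delta> \<in> B" "len (z \<circ> srefl \<delta>) < len z"
    using exists_right_descent[OF z] by blast
  then show False
    using length_comp_simple_less_iff[OF z] pos base_pos_root by blast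
qed

text \<open>Roots are normalised by \<open>sgn\<close> because \<open>R\<close> need not be reduced: \<open>\<alpha>\<close> and \<open>2 \<alpha>\<close>
  may both be roots, and must count as a single inversion.\<close>

definition root_directions :: "'a set" where
  "root_directions = sgn ` R"

definition inversions :: "('a \<Rightarrow> 'a) \<Rightarrow> 'a set" where
  "inversions w = {u \<in> root_directions. height u > 0 \<and> height (w u) < 0}"

lemma finite_inversions: "finite (inversions w)"
  using finite_roots by (simp add: inversions_def root_directions_def)

lemma height_sgn: "height (sgn x) = height x / norm x"
  by (simp add: sgn_div_norm height_scaleR divide_inverse mult.commute)

lemma height_sgn_pos_iff: "\<gamma> \<in> R \<Longrightarrow> height (sgn \<gamma>) > 0 \<longleftrightarrow> height \<gamma> > 0"
  using root_nonzero by (simp add: height_sgn zero_less_divide_iff)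

lemma height_root_direction_nonzero: "u \<in> root_directions \<Longrightarrow> height u \<noteq> 0"
  using root_pos_or_neg height_pos_root height_uminus root_nonzero
  by (force simp: root_directions_def height_sgn)

lemma weyl_root_direction:
  assumes "w \<in> W" and "u \<in> root_directions"
  shows "w u \<in> root_directions"
proof -
  obtain \<gamma> where "\<gamma> \<in> R" "u = sgn \<gamma>"
    using assms(2) by (auto simp: root_directions_def)
  then have "w u = sgn (w \<gamma>)" and "w \<gamma> \<in> R"
    using orthogonal_transformation_sgn[OF orthogonal_transformation_weyl] weyl_root assms(1)
    by auto
  then show ?thesis
    by (simp add: root_directions_def)
qed

lemma uminus_root_direction: "u \<in> root_directions \<Longrightarrow> - u \<in> root_directions"
  using uminus_root by (auto simp: root_directions_def sgn_minus[symmetric])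

lemma sgn_base_root_direction: "\<delta> \<in> B \<Longrightarrow> sgn \<delta> \<in> root_directions"
  using base_in_roots by (auto simp: root_directions_def)

lemma srefl_simple_sgn: "\<delta> \<in> B \<Longrightarrow> srefl \<delta> (sgn \<delta>) = - sgn \<delta>"
  using srefl_self[OF base_nonzero] by (simp add: sgn_div_norm srefl_scaleR)

lemma srefl_simple_root_direction_pos:
  assumes \<delta>: "\<delta> \<in> B" and u: "u \<in> root_directions" "height u > 0" and "u \<noteq> sgn \<delta>"
  shows "height (srefl \<delta> u) > 0"
proof -
  obtain \<gamma> where \<gamma>: "\<gamma> \<in> R" "u = sgn \<gamma>"
    using u by (auto simp: root_directions_def)
  then have pos: "\<gamma> \<in> Pos"
    using u height_sgn_pos_iff pos_root_iff_height by blast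
  have "\<nexists>c. \<gamma> = c *\<^sub>R \<delta>"
  proof
    assume "\<exists>c. \<gamma> = c *\<^sub>R \<delta>"
    then obtain c where "\<gamma> = c *\<^sub>R \<delta>" and "c > 0"
      using pos_multiple_of_simple pos \<delta> by blast
    then show False
      using \<open>u \<noteq> sgn \<delta>\<close> \<gamma> by (simp add: sgn_scaleR)
  qed
  then have "srefl \<delta> \<gamma> \<in> Pos"
    by (rule srefl_simple_pos_root[OF pos \<delta>])
  moreover have "srefl \<delta> u = sgn (srefl \<delta> \<gamma>)"
    using \<gamma> orthogonal_transformation_sgn orthogonal_transformation_srefl base_nonzero[OF \<delta>] by metis
  ultimately show ?thesis
    using height_sgn_pos_iff pos_root_in_roots pos_root_iff_height by metis
qed

lemma srefl_simple_height_sign: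
  assumes \<delta>: "\<delta> \<in> B" and u: "u \<in> root_directions" and "u \<noteq> sgn \<delta>" "u \<noteq> - sgn \<delta>"
  shows "height (srefl \<delta> u) > 0 \<longleftrightarrow> height u > 0"
proof
  assume "height u > 0"
  then show "height (srefl \<delta> u) > 0"
    using srefl_simple_root_direction_pos assms by blast
next
  assume pos: "height (srefl \<delta> u) > 0"
  show "height u > 0"
  proof (rule ccontr)
    assume "\<not> height u > 0"
    then have "height (- u) > 0"
      using height_root_direction_nonzero[OF u] height_uminus by force
    moreover have "- u \<noteq> sgn \<delta>"
      using \<open>u \<noteq> - sgn \<delta>\<close> by (metis minus_minus)
    ultimately have "height (srefl \<delta> (- u)) > 0"
      using srefl_simple_root_direction_pos \<delta> uminus_root_direction[OF u] by blast
    with pos show False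
      by (simp add: srefl_uminus height_uminus)
  qed
qed

lemma inversions_simple_comp_same:
  assumes w: "w \<in> W" and \<delta>: "\<delta> \<in> B" and u: "u \<in> root_directions"
    and "w u \<noteq> sgn \<delta>" and "w u \<noteq> - sgn \<delta>"
  shows "u \<in> inversions (srefl \<delta> \<circ> w) \<longleftrightarrow> u \<in> inversions w"
proof -
  have wu: "w u \<in> root_directions" "srefl \<delta> (w u) \<in> root_directions"
    using weyl_root_direction w u srefl_in_weyl base_in_roots[OF \<delta>] by auto
  have "height (srefl \<delta> (w u)) > 0 \<longleftrightarrow> height (w u) > 0"
    using srefl_simple_height_sign[OF \<delta> wu(1)] assms by blast
  then show ?thesis
    using height_root_direction_nonzero[OF wu(1)] height_root_direction_nonzero[OF wu(2)]
    by (auto simp: inversions_def)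
qed

lemma inversions_simple_comp_flip:
  assumes w: "w \<in> W" and \<delta>: "\<delta> \<in> B" and u: "u \<in> root_directions"
    and "w u = sgn \<delta> \<or> w u = - sgn \<delta>"
  shows "u \<in> inversions (srefl \<delta> \<circ> w) \<longleftrightarrow> height u > 0 \<and> u \<notin> inversions w"
proof -
  have "height (srefl \<delta> (w u)) = - height (w u)"
    using assms srefl_simple_sgn[OF \<delta>] by (auto simp: srefl_uminus height_uminus)
  then show ?thesis
    using height_root_direction_nonzero[OF weyl_root_direction[OF w u]] u
    by (auto simp: inversions_def)
qed

text \<open>The inversion added or removed is the direction that \<open>w\<close> sends to \<open>\<plusminus> sgn \<delta>\<close>.\<close>

lemma inversions_simple_comp:
  assumes w: "w \<in> W" and \<delta>: "\<delta> \<in> B"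
  obtains u0 where "inversions (srefl \<delta> \<circ> w) =
    (if u0 \<in> inversions w then inversions w - {u0} else insert u0 (inversions w))"
proof -
  define e where "e = inv w (sgn \<delta>)"
  have e: "e \<in> root_directions"
    unfolding e_def using weyl_root_direction inv_in_weyl[OF w] sgn_base_root_direction[OF \<delta>] by blast
  define u0 where "u0 = (if height e > 0 then e else - e)"
  have u0: "u0 \<in> root_directions" "height u0 > 0"
    using e uminus_root_direction height_root_direction_nonzero[OF e]
    by (auto simp: u0_def height_uminus)
  have w_u0: "w u0 = sgn \<delta> \<or> w u0 = - sgn \<delta>"
    using weyl_uminus[OF w] w by (simp add: u0_def e_def)
  have w_u: "w u \<noteq> sgn \<delta> \<and> w u \<noteq> - sgn \<delta>" if "height u > 0" "u \<noteq> u0" for u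
  proof -
    have "w u = sgn \<delta> \<Longrightarrow> u = e" and "w u = - sgn \<delta> \<Longrightarrow> u = - e"
      using w weyl_uminus[OF inv_in_weyl[OF w]] inv_weyl_apply[OF w, of u] by (auto simp: e_def)
    moreover have "u = e \<or> u = - e \<Longrightarrow> u = u0"
      using that(1) height_root_direction_nonzero[OF e] by (auto simp: u0_def height_uminus)
    ultimately show ?thesis
      using that(2) by blast
  qed
  have mem: "u \<in> inversions (srefl \<delta> \<circ> w) \<longleftrightarrow> (if u = u0 then u \<notin> inversions w else u \<in> inversions w)"
    for u
  proof (cases "u \<in> root_directions \<and> height u > 0")
    case False
    then show ?thesis using u0 by (auto simp: inversions_def)
  next
    case True
    then show ?thesis
      using inversions_simple_comp_flip[OF w \<delta> u0(1) w_u0] u0(2)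
        inversions_simple_comp_same[OF w \<delta>] w_u by auto
  qed
  have "inversions (srefl \<delta> \<circ> w) =
      (if u0 \<in> inversions w then inversions w - {u0} else insert u0 (inversions w))"
    by (auto simp: mem split: if_splits)
  then show ?thesis
    by (rule that)
qed

lemma odd_card_inversions_simple_comp:
  assumes "w \<in> W" and "\<delta> \<in> B"
  shows "odd (card (inversions (srefl \<delta> \<circ> w)) + card (inversions w))"
proof -
  obtain u0 where u0: "inversions (srefl \<delta> \<circ> w) =
      (if u0 \<in> inversions w then inversions w - {u0} else insert u0 (inversions w))"
    using inversions_simple_comp[OF assms] .
  show ?thesis
  proof (cases "u0 \<in> inversions w")
    case True
    then have "card (inversions w) = card (inversions (srefl \<delta> \<circ> w)) + 1"
      using u0 finite_inversions card_Suc_Diff1 by fastforce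
    then show ?thesis by simp
  next
    case False
    then have "card (inversions (srefl \<delta> \<circ> w)) = card (inversions w) + 1"
      using u0 finite_inversions by simp
    then show ?thesis by simp
  qed
qed

lemma even_card_inversions_plus_length:
  "set ss \<subseteq> S \<Longrightarrow> even (card (inversions (comp_list ss)) + length ss)"
proof (induction ss)
  case Nil
  have "inversions (comp_list []) = {}"
    by (auto simp: inversions_def)
  then show ?case
    by (metis add_0 card.empty even_zero list.size(3))
next
  case (Cons s ss)
  then obtain \<delta> where "\<delta> \<in> B" "s = srefl \<delta>"
    by (auto simp: simple_refls_def)
  then have "odd (card (inversions (comp_list (s # ss))) + card (inversions (comp_list ss)))"
    using odd_card_inversions_simple_comp comp_list_in_weyl Cons.prems by simp
  moreover have "even (card (inversions (comp_list ss)) + length ss)"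
    using Cons by simp
  ultimately show ?case
    unfolding length_Cons by presburger
qed

lemma even_length_plus_word_length:
  "w \<in> W \<Longrightarrow> set ss \<subseteq> S \<Longrightarrow> w = comp_list ss \<Longrightarrow> even (len w + length ss)"
  by (erule reduced_word) (metis even_add even_card_inversions_plus_length)

lemma length_comp_srefl_neq:
  assumes w: "w \<in> W" and \<beta>: "\<beta> \<in> R"
  shows "len (w \<circ> srefl \<beta>) \<noteq> len w"
proof -
  obtain ss where ss: "set ss \<subseteq> S" "length ss = len w" "w = comp_list ss"
    using reduced_word[OF w] .
  obtain ts where ts: "set ts \<subseteq> S" "odd (length ts)" "srefl \<beta> = comp_list ts"
    using srefl_odd_simple_word[OF \<beta>] by blast
  have "w \<circ> srefl \<beta> = comp_list (ss @ ts)"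
    using ss ts by (simp add: comp_list_append)
  then have "even (len (w \<circ> srefl \<beta>) + length (ss @ ts))"
    using even_length_plus_word_length[OF weyl_comp[OF w srefl_in_weyl[OF \<beta>]]] ss ts
    by simp
  then show ?thesis
    using ss(2) ts(2) by auto
qed

lemma length_srefl_comp_neq: "w \<in> W \<Longrightarrow> \<beta> \<in> R \<Longrightarrow> len (srefl \<beta> \<circ> w) \<noteq> len w"
  using length_comp_srefl_neq[OF inv_in_weyl] length_srefl_comp_eq length_inv by simp

lemma length_comp_srefl_greater_descent:
  assumes w: "w \<in> W" and \<beta>: "\<beta> \<in> R" and \<delta>: "\<delta> \<in> B"
    and longer: "len w < len (w \<circ> srefl \<beta>)" and descent: "len (w \<circ> srefl \<delta>) < len w"
  shows "len (w \<circ> srefl \<delta>) < len (w \<circ> srefl \<delta> \<circ> srefl (srefl \<delta> \<beta>))"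
proof -
  have "w \<circ> srefl \<delta> \<circ> srefl (srefl \<delta> \<beta>) = w \<circ> srefl \<beta> \<circ> srefl \<delta>"
    using srefl_srefl_conjugate[OF base_nonzero[OF \<delta>]] base_in_roots[OF \<delta>]
    by (simp add: comp_assoc)
  moreover have "len (w \<circ> srefl \<beta>) \<le> len (w \<circ> srefl \<beta> \<circ> srefl \<delta>) + 1"
    using length_le_comp_simple weyl_comp[OF w srefl_in_weyl[OF \<beta>]] \<delta> by blast
  ultimately show ?thesis
    using longer descent by simp
qed

lemma pos_if_length_comp_srefl_greater:
  "w \<in> W \<Longrightarrow> \<beta> \<in> Pos \<Longrightarrow> len w < len (w \<circ> srefl \<beta>) \<Longrightarrow> w \<beta> \<in> Pos"
proof (induction "len w" arbitrary: w \<beta> rule: less_induct)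
  case less
  note w = less.prems(1) and \<beta> = less.prems(2) and longer = less.prems(3)
  show ?case
  proof (cases "len w = 0")
    case True
    then show ?thesis using length_zero_imp_id[OF w] \<beta> by simp
  next
    case False
    then obtain \<delta> where \<delta>: "\<delta> \<in> B" "len (w \<circ> srefl \<delta>) < len w"
      using exists_right_descent[OF w] by blast
    have \<delta>R: "\<delta> \<in> R"
      using base_in_roots[OF \<delta>(1)] .
    show ?thesis
    proof (cases "\<exists>c. \<beta> = c *\<^sub>R \<delta>")
      case True
      then have "srefl \<beta> = srefl \<delta>"
        using srefl_root_multiple pos_root_in_roots[OF \<beta>] by blast
      then show ?thesis using longer \<delta> by simp
    next
      case False
      then have "srefl \<delta> \<beta> \<in> Pos"
        using srefl_simple_pos_root[OF \<beta> \<delta>(1)] by blast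
      then have "(w \<circ> srefl \<delta>) (srefl \<delta> \<beta>) \<in> Pos"
        using less.hyps[OF \<delta>(2) weyl_comp[OF w srefl_in_weyl[OF \<delta>R]]]
          length_comp_srefl_greater_descent[OF w pos_root_in_roots[OF \<beta>] \<delta>(1) longer \<delta>(2)]
        by blast
      then show ?thesis
        using \<delta>R by simp
    qed
  qed
qed

lemma length_comp_srefl_greater_iff:
  assumes w: "w \<in> W" and \<beta>: "\<beta> \<in> Pos"
  shows "len w < len (w \<circ> srefl \<beta>) \<longleftrightarrow> w \<beta> \<in> Pos"
proof
  assume "len w < len (w \<circ> srefl \<beta>)"
  then show "w \<beta> \<in> Pos"
    using pos_if_length_comp_srefl_greater w \<beta> by blast
next
  assume pos: "w \<beta> \<in> Pos"
  have \<beta>R: "\<beta> \<in> R"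
    using pos_root_in_roots[OF \<beta>] .
  show "len w < len (w \<circ> srefl \<beta>)"
  proof (rule ccontr)
    assume "\<not> ?thesis"
    then have "len (w \<circ> srefl \<beta>) < len (w \<circ> srefl \<beta> \<circ> srefl \<beta>)"
      using length_comp_srefl_neq[OF w \<beta>R] \<beta>R by simp
    then have "(w \<circ> srefl \<beta>) \<beta> \<in> Pos"
      using pos_if_length_comp_srefl_greater[OF weyl_comp[OF w srefl_in_weyl[OF \<beta>R]] \<beta>] by blast
    moreover have "(w \<circ> srefl \<beta>) \<beta> = - w \<beta>"
      using srefl_self[OF root_nonzero[OF \<beta>R]] weyl_uminus[OF w] by simp
    ultimately show False
      using uminus_pos_root_not_pos[OF pos] by simp
  qed
qed

lemma length_srefl_comp_greater_iff:
  "w \<in> W \<Longrightarrow> \<beta> \<in> Pos \<Longrightarrow> len w < len (srefl \<beta> \<circ> w) \<longleftrightarrow> inv w \<beta> \<in> Pos"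
  using length_comp_srefl_greater_iff[OF inv_in_weyl] length_srefl_comp_eq[OF _ pos_root_in_roots]
    length_inv by simp


section \<open>Bruhat order\<close>

abbreviation bstep where "bstep \<equiv> bruhat_step R B"

lemma bruhat_step_pos_root:
  assumes "bstep u w"
  obtains \<beta> where "\<beta> \<in> Pos" and "w = srefl \<beta> \<circ> u" and "len u < len w"
proof -
  obtain \<alpha> where "\<alpha> \<in> R" "w = srefl \<alpha> \<circ> u" "len u < len w"
    using assms by (auto simp: bruhat_step_def)
  then show ?thesis
    using that root_pos_or_neg srefl_uminus_root by metis
qed

lemma bruhat_stepI: "\<beta> \<in> R \<Longrightarrow> len u < len (srefl \<beta> \<circ> u) \<Longrightarrow> bstep u (srefl \<beta> \<circ> u)"
  by (auto simp: bruhat_step_def)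

lemma bruhat_step_comp_srefl:
  assumes "a \<in> W" and "\<alpha> \<in> R" and "len a < len (a \<circ> srefl \<alpha>)"
  shows "bstep a (a \<circ> srefl \<alpha>)"
  using assms bruhat_stepI[OF weyl_root] comp_srefl_conjugate[OF orthogonal_transformation_weyl]
  by metis

lemma bruhat_from_comp_srefl:
  assumes "a \<in> W" and "\<alpha> \<in> R" and "bstep\<^sup>*\<^sup>* (a \<circ> srefl \<alpha>) x"
  shows "len (a \<circ> srefl \<alpha>) < len a \<or> bstep\<^sup>*\<^sup>* a x"
  using length_comp_srefl_neq[OF assms(1,2)] bruhat_step_comp_srefl[OF assms(1,2)] assms(3)
  by (meson converse_rtranclp_into_rtranclp linorder_neqE_nat)

lemma bruhat_step_weyl: "u \<in> W \<Longrightarrow> bstep u w \<Longrightarrow> w \<in> W"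
  by (auto simp: bruhat_step_def intro: weyl_comp srefl_in_weyl)

lemma bruhat_step_simple_comp:
  assumes u: "u \<in> W" and \<beta>: "\<beta> \<in> Pos" and \<delta>: "\<delta> \<in> B" and longer: "len u < len (srefl \<beta> \<circ> u)"
  shows "srefl \<beta> = srefl \<delta> \<or> bstep (srefl \<delta> \<circ> u) (srefl \<delta> \<circ> (srefl \<beta> \<circ> u))"
proof (cases "\<exists>c. \<beta> = c *\<^sub>R \<delta>")
  case True
  then show ?thesis
    using srefl_root_multiple pos_root_in_roots[OF \<beta>] by blast
next
  case False
  define \<beta>' where "\<beta>' = srefl \<delta> \<beta>"
  have \<delta>R: "\<delta> \<in> R"
    using base_in_roots[OF \<delta>] .
  have \<beta>': "\<beta>' \<in> Pos"
    unfolding \<beta>'_def using srefl_simple_pos_root[OF \<beta> \<delta> False] .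
  have conj: "srefl \<delta> \<circ> (srefl \<beta> \<circ> u) = srefl \<beta>' \<circ> (srefl \<delta> \<circ> u)"
    using srefl_srefl_conjugate[OF base_nonzero[OF \<delta>]] \<delta>R by (simp add: \<beta>'_def comp_assoc)
  have "inv (srefl \<delta> \<circ> u) \<beta>' = inv u \<beta>"
    using inv_weyl_comp[OF srefl_in_weyl[OF \<delta>R] u] \<delta>R by (simp add: \<beta>'_def)
  then have "len (srefl \<delta> \<circ> u) < len (srefl \<beta>' \<circ> (srefl \<delta> \<circ> u))"
    using length_srefl_comp_greater_iff[OF weyl_comp[OF srefl_in_weyl[OF \<delta>R] u] \<beta>']
      length_srefl_comp_greater_iff[OF u \<beta>] longer by simp
  then show ?thesis
    using bruhat_stepI pos_root_in_roots[OF \<beta>'] conj by simp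
qed

lemma bruhat_step_comp_simple:
  assumes u: "u \<in> W" and \<beta>: "\<beta> \<in> Pos" and \<delta>: "\<delta> \<in> B" and longer: "len u < len (srefl \<beta> \<circ> u)"
  shows "srefl \<beta> \<circ> u = u \<circ> srefl \<delta> \<or> bstep (u \<circ> srefl \<delta>) (srefl \<beta> \<circ> (u \<circ> srefl \<delta>))"
proof -
  define \<gamma> where "\<gamma> = inv u \<beta>"
  have \<gamma>: "\<gamma> \<in> Pos"
    using length_srefl_comp_greater_iff[OF u \<beta>] longer by (simp add: \<gamma>_def)
  have \<delta>R: "\<delta> \<in> R"
    using base_in_roots[OF \<delta>] .
  show ?thesis
  proof (cases "\<exists>c. \<gamma> = c *\<^sub>R \<delta>")
    case True
    then have "srefl \<gamma> = srefl \<delta>"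
      using srefl_root_multiple pos_root_in_roots[OF \<gamma>] by blast
    moreover have "u \<circ> srefl \<gamma> = srefl \<beta> \<circ> u"
      using comp_srefl_conjugate[OF orthogonal_transformation_weyl[OF u]] u by (simp add: \<gamma>_def)
    ultimately show ?thesis by simp
  next
    case False
    then have "srefl \<delta> \<gamma> \<in> Pos"
      using srefl_simple_pos_root[OF \<gamma> \<delta>] by blast
    moreover have "inv (u \<circ> srefl \<delta>) = srefl \<delta> \<circ> inv u"
      using inv_weyl_comp[OF u srefl_in_weyl[OF \<delta>R]] \<delta>R by simp
    ultimately have "len (u \<circ> srefl \<delta>) < len (srefl \<beta> \<circ> (u \<circ> srefl \<delta>))"
      using length_srefl_comp_greater_iff[OF weyl_comp[OF u srefl_in_weyl[OF \<delta>R]] \<beta>]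
      by (simp add: \<gamma>_def)
    then show ?thesis
      using bruhat_stepI pos_root_in_roots[OF \<beta>] by blast
  qed
qed

lemma bruhat_simple_comp_lift:
  assumes "bstep\<^sup>*\<^sup>* u w" and "u \<in> W" and \<delta>: "\<delta> \<in> B" and longer: "len w < len (srefl \<delta> \<circ> w)"
  shows "bstep\<^sup>*\<^sup>* (srefl \<delta> \<circ> u) (srefl \<delta> \<circ> w)"
  using assms(1,2)
proof (induction rule: converse_rtranclp_induct)
  case base
  then show ?case by simp
next
  case (step u u1)
  have IH: "bstep\<^sup>*\<^sup>* (srefl \<delta> \<circ> u1) (srefl \<delta> \<circ> w)"
    using step bruhat_step_weyl by blast
  obtain \<beta> where \<beta>: "\<beta> \<in> Pos" "u1 = srefl \<beta> \<circ> u" "len u < len u1"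
    using bruhat_step_pos_root[OF step.hyps(1)] .
  from bruhat_step_simple_comp[OF step.prems \<beta>(1) \<delta>] \<beta>
  consider "srefl \<beta> = srefl \<delta>" | "bstep (srefl \<delta> \<circ> u) (srefl \<delta> \<circ> u1)"
    by auto
  then show ?case
  proof cases
    case 1
    then have "srefl \<delta> \<circ> u = u1"
      using \<beta> base_in_roots[OF \<delta>] by simp
    moreover have "bstep w (srefl \<delta> \<circ> w)"
      using bruhat_stepI[OF base_in_roots[OF \<delta>] longer] .
    ultimately show ?thesis
      using step.hyps(2) by (metis rtranclp.rtrancl_into_rtrancl)
  next
    case 2
    then show ?thesis
      using IH by (rule converse_rtranclp_into_rtranclp)
  qed
qed

lemma bruhat_comp_simple_lift:
  assumes "bstep\<^sup>*\<^sup>* a w" and "a \<in> W" and \<delta>: "\<delta> \<in> B" and shorter: "len (w \<circ> srefl \<delta>) < len w"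
  shows "bstep\<^sup>*\<^sup>* a (w \<circ> srefl \<delta>) \<or>
    (len (a \<circ> srefl \<delta>) < len a \<and> bstep\<^sup>*\<^sup>* (a \<circ> srefl \<delta>) (w \<circ> srefl \<delta>))"
  using assms(1,2)
proof (induction rule: converse_rtranclp_induct)
  case base
  show ?case using shorter by blast
next
  case (step a a1)
  have \<delta>R: "\<delta> \<in> R"
    using base_in_roots[OF \<delta>] .
  obtain \<beta> where \<beta>: "\<beta> \<in> Pos" "a1 = srefl \<beta> \<circ> a" "len a < len a1"
    using bruhat_step_pos_root[OF step.hyps(1)] .
  from step bruhat_step_weyl consider "bstep\<^sup>*\<^sup>* a1 (w \<circ> srefl \<delta>)"
    | "len (a1 \<circ> srefl \<delta>) < len a1" "bstep\<^sup>*\<^sup>* (a1 \<circ> srefl \<delta>) (w \<circ> srefl \<delta>)"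
    by blast
  then show ?case
  proof cases
    case 1
    then show ?thesis
      using step.hyps(1) by (blast intro: converse_rtranclp_into_rtranclp)
  next
    case 2
    show ?thesis
    proof (cases "a1 = a \<circ> srefl \<delta>")
      case True
      then have "a1 \<circ> srefl \<delta> = a"
        using \<delta>R by simp
      then show ?thesis
        using 2 by metis
    next
      case False
      then have "bstep (a \<circ> srefl \<delta>) (a1 \<circ> srefl \<delta>)"
        using bruhat_step_comp_simple[OF step.prems \<beta>(1) \<delta>] \<beta> by (simp add: comp_assoc)
      then have "bstep\<^sup>*\<^sup>* (a \<circ> srefl \<delta>) (w \<circ> srefl \<delta>)"
        using 2 by (blast intro: converse_rtranclp_into_rtranclp)
      then show ?thesis
        using bruhat_from_comp_srefl[OF step.prems \<delta>R] by blast
    qed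
  qed
qed


section \<open>Dominant weights\<close>

abbreviation DW where "DW \<equiv> dom_weights R B"

lemma dominant_inner_pos_root: "\<nu> \<in> DW \<Longrightarrow> \<gamma> \<in> Pos \<Longrightarrow> \<nu> \<bullet> \<gamma> \<ge> 0"
  by (auto simp: dom_weights_def)

lemma dominant_inner_simple: "\<nu> \<in> DW \<Longrightarrow> \<delta> \<in> B \<Longrightarrow> \<nu> \<bullet> \<delta> \<ge> 0"
  using dominant_inner_pos_root base_pos_root by blast

lemma dominantI_simple:
  assumes "\<nu> \<in> weights R" and "\<And>\<delta>. \<delta> \<in> B \<Longrightarrow> \<nu> \<bullet> \<delta> \<ge> 0"
  shows "\<nu> \<in> DW"
proof -
  have "\<nu> \<bullet> \<gamma> \<ge> 0" if "\<gamma> \<in> Pos" for \<gamma>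
    using that assms(2) by (subst inner_base_expansion) (auto simp: pos_roots_iff intro: sum_nonneg)
  then show ?thesis
    using assms(1) by (auto simp: dom_weights_def)
qed

lemma pos_root_if_dominant_inner_pos: "\<nu> \<in> DW \<Longrightarrow> \<gamma> \<in> R \<Longrightarrow> \<nu> \<bullet> \<gamma> > 0 \<Longrightarrow> \<gamma> \<in> Pos"
  using not_pos_root_iff dominant_inner_pos_root[of \<nu> "- \<gamma>"] by force

lemma weyl_pos_root_if_support_pos:
  assumes x: "x \<in> W" and \<gamma>: "\<gamma> \<in> Pos"
    and support: "\<And>\<delta>. \<delta> \<in> B \<Longrightarrow> coord \<delta> \<gamma> > 0 \<Longrightarrow> x \<delta> \<in> Pos"
  shows "x \<gamma> \<in> Pos"
proof -
  have "height (x \<gamma>) = (\<Sum>\<delta>\<in>B. coord \<delta> \<gamma> * height (x \<delta>))"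
    using linear_base_expansion[OF linear_weyl[OF x], of \<gamma>] by (simp add: height_sum height_scaleR)
  also have "\<dots> > 0"
  proof -
    obtain \<delta> where \<delta>: "\<delta> \<in> B" "coord \<delta> \<gamma> > 0"
      using pos_root_has_pos_coord[OF \<gamma>] .
    show ?thesis
    proof (rule sum_pos2[OF finite_base \<delta>(1)])
      show "coord \<delta> \<gamma> * height (x \<delta>) > 0"
        using support[OF \<delta>] height_pos_root \<delta>(2) by simp
      show "coord \<delta>' \<gamma> * height (x \<delta>') \<ge> 0" if "\<delta>' \<in> B" for \<delta>'
      proof (cases "coord \<delta>' \<gamma> > 0")
        case True
        then show ?thesis
          using support[OF that] height_pos_root by (simp add: less_imp_le)
      next
        case False
        then have "coord \<delta>' \<gamma> = 0"
          using \<gamma> that by (force simp: pos_roots_iff)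
        then show ?thesis by simp
      qed
    qed
  qed
  finally show ?thesis
    using pos_root_iff_height[OF weyl_root[OF x pos_root_in_roots[OF \<gamma>]]] by simp
qed

definition neg_pos_roots :: "'a \<Rightarrow> 'a set" where
  "neg_pos_roots \<mu> = {\<gamma> \<in> Pos. \<mu> \<bullet> \<gamma> < 0}"

lemma card_neg_pos_roots_srefl_less:
  assumes \<delta>: "\<delta> \<in> B" and neg: "\<mu> \<bullet> \<delta> < 0"
  shows "card (neg_pos_roots (srefl \<delta> \<mu>)) < card (neg_pos_roots \<mu>)"
proof -
  have fin: "finite (neg_pos_roots \<mu>)"
    using finite_roots by (rule finite_subset[rotated]) (auto simp: neg_pos_roots_def pos_root_in_roots)
  have \<delta>R: "\<delta> \<in> R"
    using base_in_roots[OF \<delta>] .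
  have "neg_pos_roots (srefl \<delta> \<mu>) \<subseteq> srefl \<delta> ` (neg_pos_roots \<mu> - {\<delta>})"
  proof
    fix \<gamma> assume "\<gamma> \<in> neg_pos_roots (srefl \<delta> \<mu>)"
    then have \<gamma>: "\<gamma> \<in> Pos" and neg_\<gamma>: "\<mu> \<bullet> srefl \<delta> \<gamma> < 0"
      by (auto simp: neg_pos_roots_def inner_srefl_commute)
    have "\<nexists>c. \<gamma> = c *\<^sub>R \<delta>"
    proof
      assume "\<exists>c. \<gamma> = c *\<^sub>R \<delta>"
      then obtain c where "\<gamma> = c *\<^sub>R \<delta>" "c > 0"
        using pos_multiple_of_simple[OF \<gamma> \<delta>] by blast
      then have "\<mu> \<bullet> srefl \<delta> \<gamma> = - c * (\<mu> \<bullet> \<delta>)"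
        using srefl_self[OF base_nonzero[OF \<delta>]] by (simp add: srefl_scaleR)
      with neg neg_\<gamma> \<open>c > 0\<close> show False
        by (simp add: zero_less_mult_iff)
    qed
    then have "srefl \<delta> \<gamma> \<in> Pos"
      using srefl_simple_pos_root[OF \<gamma> \<delta>] by blast
    moreover have "srefl \<delta> \<gamma> \<noteq> \<delta>"
      using srefl_self[OF base_nonzero[OF \<delta>]] uminus_pos_root_not_pos[OF base_pos_root[OF \<delta>]] \<gamma> \<delta>R
      by (metis srefl_srefl_root)
    ultimately have "srefl \<delta> \<gamma> \<in> neg_pos_roots \<mu> - {\<delta>}"
      using neg_\<gamma> by (simp add: neg_pos_roots_def)
    then show "\<gamma> \<in> srefl \<delta> ` (neg_pos_roots \<mu> - {\<delta>})"
      using \<delta>R by (metis image_eqI srefl_srefl_root)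
  qed
  then have "card (neg_pos_roots (srefl \<delta> \<mu>)) \<le> card (neg_pos_roots \<mu> - {\<delta>})"
    using fin by (meson card_image_le card_mono finite_Diff finite_imageI order_trans)
  also have "\<dots> < card (neg_pos_roots \<mu>)"
    using fin base_pos_root[OF \<delta>] neg by (intro card_Diff1_less) (auto simp: neg_pos_roots_def)
  finally show ?thesis .
qed

lemma exists_weyl_dominant: "\<mu> \<in> weights R \<Longrightarrow> \<exists>x\<in>W. x \<mu> \<in> DW"
proof (induction "card (neg_pos_roots \<mu>)" arbitrary: \<mu> rule: less_induct)
  case less
  show ?case
  proof (cases "\<forall>\<delta>\<in>B. \<mu> \<bullet> \<delta> \<ge> 0")
    case True
    then have "id \<mu> \<in> DW"
      using dominantI_simple less.prems by simp
    with id_in_weyl show ?thesis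
      by blast
  next
    case False
    then obtain \<delta> where \<delta>: "\<delta> \<in> B" "\<mu> \<bullet> \<delta> < 0"
      by (auto simp: not_le)
    then obtain x where "x \<in> W" "x (srefl \<delta> \<mu>) \<in> DW"
      using less.hyps[OF card_neg_pos_roots_srefl_less] weights_srefl less.prems base_in_roots
      by blast
    then show ?thesis
      using weyl_comp srefl_in_weyl base_in_roots[OF \<delta>(1)] by (metis comp_apply)
  qed
qed

lemma dominant_weyl_unique:
  "\<nu> \<in> DW \<Longrightarrow> \<nu>' \<in> DW \<Longrightarrow> x \<in> W \<Longrightarrow> x \<nu> = \<nu>' \<Longrightarrow> \<nu>' = \<nu>"
proof (induction "len x" arbitrary: x rule: less_induct)
  case less
  note \<nu> = less.prems(1) and \<nu>' = less.prems(2) and x = less.prems(3)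
  show ?case
  proof (cases "len x = 0")
    case True
    then show ?thesis using length_zero_imp_id[OF x] less.prems by simp
  next
    case False
    then obtain \<delta> where \<delta>: "\<delta> \<in> B" "len (srefl \<delta> \<circ> x) < len x"
      using exists_left_descent[OF x] by blast
    have \<delta>R: "\<delta> \<in> R"
      using base_in_roots[OF \<delta>(1)] .
    have "- inv x \<delta> \<in> Pos"
      using length_simple_comp_less_iff[OF x \<delta>(1)] \<delta>(2)
        not_pos_root_iff[OF weyl_root[OF inv_in_weyl[OF x] \<delta>R]] by simp
    then have "\<nu> \<bullet> inv x \<delta> \<le> 0"
      using dominant_inner_pos_root[OF \<nu>] by fastforce
    moreover have "\<nu>' \<bullet> \<delta> = \<nu> \<bullet> inv x \<delta>"
      using inner_weyl_inv[OF x] less.prems(4) by blast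
    ultimately have "\<nu>' \<bullet> \<delta> = 0"
      using dominant_inner_simple[OF \<nu>' \<delta>(1)] by simp
    then have "(srefl \<delta> \<circ> x) \<nu> = \<nu>'"
      using srefl_orthogonal_fixed less.prems(4) by simp
    then show ?thesis
      using less.hyps[OF \<delta>(2) \<nu> \<nu>' weyl_comp[OF srefl_in_weyl[OF \<delta>R] x]] by blast
  qed
qed

lemma dom_rep:
  assumes "\<mu> \<in> weights R"
  shows dom_rep_dominant: "dom_rep R B \<mu> \<in> DW"
    and dom_rep_in_orbit: "\<exists>x\<in>W. x \<mu> = dom_rep R B \<mu>"
proof -
  obtain x where x: "x \<in> W" "x \<mu> \<in> DW"
    using exists_weyl_dominant[OF assms] by blast
  have "\<nu> = x \<mu>" if orbit: "\<nu> \<in> (\<lambda>w. w \<mu>) ` W" and dominant: "\<nu> \<in> DW" for \<nu>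
  proof -
    obtain y where y: "y \<in> W" "\<nu> = y \<mu>"
      using orbit by blast
    then have "(y \<circ> inv x) (x \<mu>) = \<nu>"
      using x by simp
    then show ?thesis
      using dominant_weyl_unique[OF x(2) dominant weyl_comp[OF y(1) inv_in_weyl[OF x(1)]]] by simp
  qed
  then have "dom_rep R B \<mu> = x \<mu>"
    unfolding dom_rep_def using x by (intro the_equality) auto
  then show "dom_rep R B \<mu> \<in> DW" "\<exists>x\<in>W. x \<mu> = dom_rep R B \<mu>"
    using x by auto
qed

lemma dom_rep_weyl:
  assumes \<mu>: "\<mu> \<in> weights R" and w: "w \<in> W"
  shows "dom_rep R B (w \<mu>) = dom_rep R B \<mu>"
proof -
  obtain x where x: "x \<in> W" "x \<mu> = dom_rep R B \<mu>"
    using dom_rep_in_orbit[OF \<mu>] by blast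
  obtain y where y: "y \<in> W" "y (w \<mu>) = dom_rep R B (w \<mu>)"
    using dom_rep_in_orbit[OF weyl_weights[OF w \<mu>]] by blast
  have "(y \<circ> w \<circ> inv x) (dom_rep R B \<mu>) = dom_rep R B (w \<mu>)"
    using x y by (metis comp_apply inv_weyl_apply)
  then show ?thesis
    using dominant_weyl_unique[OF dom_rep_dominant[OF \<mu>] dom_rep_dominant[OF weyl_weights[OF w \<mu>]]]
      weyl_comp[OF weyl_comp[OF y(1) w] inv_in_weyl[OF x(1)]] by blast
qed

text \<open>For dominant \<open>\<nu>\<close>, the \<open>x\<close> with \<open>min_coset_rep \<nu> x\<close> are exactly the minimal length
  elements of the cosets of the stabiliser of \<open>\<nu>\<close>.\<close>

definition min_coset_rep :: "'a \<Rightarrow> ('a \<Rightarrow> 'a) \<Rightarrow> bool" where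
  "min_coset_rep \<nu> x \<longleftrightarrow> (\<forall>\<delta>\<in>B. \<nu> \<bullet> \<delta> = 0 \<longrightarrow> x \<delta> \<in> Pos)"

lemma dominant_orthogonal_support:
  assumes \<nu>: "\<nu> \<in> DW" and \<gamma>: "\<gamma> \<in> Pos" and "\<nu> \<bullet> \<gamma> = 0" and \<delta>: "\<delta> \<in> B" "coord \<delta> \<gamma> > 0"
  shows "\<nu> \<bullet> \<delta> = 0"
proof -
  have nonneg: "\<forall>\<delta>\<in>B. coord \<delta> \<gamma> * (\<nu> \<bullet> \<delta>) \<ge> 0"
    using \<gamma> dominant_inner_simple[OF \<nu>] by (simp add: pos_roots_iff)
  have "(\<Sum>\<delta>\<in>B. coord \<delta> \<gamma> * (\<nu> \<bullet> \<delta>)) = 0"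
    using \<open>\<nu> \<bullet> \<gamma> = 0\<close> inner_base_expansion[of \<nu> \<gamma>] by simp
  moreover have "(\<Sum>\<delta>\<in>B. coord \<delta> \<gamma> * (\<nu> \<bullet> \<delta>)) = 0 \<longleftrightarrow> (\<forall>\<delta>\<in>B. coord \<delta> \<gamma> * (\<nu> \<bullet> \<delta>) = 0)"
    using nonneg by (intro sum_nonneg_eq_0_iff[OF finite_base]) simp
  ultimately have "\<forall>\<delta>\<in>B. coord \<delta> \<gamma> * (\<nu> \<bullet> \<delta>) = 0"
    by blast
  then have "coord \<delta> \<gamma> * (\<nu> \<bullet> \<delta>) = 0"
    using \<delta>(1) by blast
  then show ?thesis
    using \<delta>(2) by simp
qed

lemma min_coset_rep_pos_root:
  assumes \<nu>: "\<nu> \<in> DW" and x: "x \<in> W" and rep: "min_coset_rep \<nu> x"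
    and \<gamma>: "\<gamma> \<in> Pos" and orth: "\<nu> \<bullet> \<gamma> = 0"
  shows "x \<gamma> \<in> Pos"
proof (rule weyl_pos_root_if_support_pos[OF x \<gamma>])
  fix \<delta> assume "\<delta> \<in> B" and "coord \<delta> \<gamma> > 0"
  with dominant_orthogonal_support[OF \<nu> \<gamma> orth] have "\<nu> \<bullet> \<delta> = 0"
    by blast
  with rep \<open>\<delta> \<in> B\<close> show "x \<delta> \<in> Pos"
    by (simp add: min_coset_rep_def)
qed

lemma min_coset_rep_unique:
  assumes \<nu>: "\<nu> \<in> DW" and x: "x \<in> W" and y: "y \<in> W" and eq: "x \<nu> = y \<nu>"
    and "min_coset_rep \<nu> x" and "min_coset_rep \<nu> y"
  shows "x = y"
proof -
  define z where "z = inv x \<circ> y"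
  have z: "z \<in> W" and "z \<nu> = \<nu>"
    using weyl_comp[OF inv_in_weyl[OF x] y] x eq[symmetric] by (auto simp: z_def)
  have "z \<gamma> \<in> Pos" if \<gamma>: "\<gamma> \<in> Pos" for \<gamma>
  proof (cases "\<nu> \<bullet> \<gamma> > 0")
    case True
    then show ?thesis
      using pos_root_if_dominant_inner_pos[OF \<nu> weyl_root[OF z pos_root_in_roots[OF \<gamma>]]]
        inner_weyl[OF z, of \<nu> \<gamma>] \<open>z \<nu> = \<nu>\<close> by simp
  next
    case False
    then have "\<nu> \<bullet> \<gamma> = 0"
      using dominant_inner_pos_root[OF \<nu> \<gamma>] by simp
    then have y\<gamma>: "y \<gamma> \<in> Pos"
      using min_coset_rep_pos_root assms \<gamma> by blast
    have "\<nu> \<bullet> z \<gamma> = 0"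
      using inner_weyl[OF z, of \<nu> \<gamma>] \<open>z \<nu> = \<nu>\<close> \<open>\<nu> \<bullet> \<gamma> = 0\<close> by simp
    moreover have "z \<gamma> \<in> R"
      using weyl_root[OF z pos_root_in_roots[OF \<gamma>]] .
    moreover have "x (z \<gamma>) = y \<gamma>"
      using x by (simp add: z_def)
    ultimately have "- z \<gamma> \<notin> Pos"
      using min_coset_rep_pos_root[OF \<nu> x \<open>min_coset_rep \<nu> x\<close>, of "- z \<gamma>"]
        weyl_uminus[OF x] uminus_pos_root_not_pos[OF y\<gamma>] by auto
    then show ?thesis
      using not_pos_root_iff[OF \<open>z \<gamma> \<in> R\<close>] by blast
  qed
  then have "z = id"
    by (rule weyl_eq_id_if_pos_roots_preserved[OF z])
  then show ?thesis
    using x by (metis comp_id z_def weyl_apply_inv inv_weyl_apply o_def ext)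
qed

lemma min_coset_rep_if_minimal:
  assumes y: "y \<in> W" and minimal: "\<And>y'. y' \<in> W \<Longrightarrow> y' \<nu> = y \<nu> \<Longrightarrow> len y \<le> len y'"
  shows "min_coset_rep \<nu> y"
  unfolding min_coset_rep_def
proof (intro ballI impI)
  fix \<delta> assume \<delta>: "\<delta> \<in> B" and "\<nu> \<bullet> \<delta> = 0"
  then have "(y \<circ> srefl \<delta>) \<nu> = y \<nu>"
    by (simp add: inner_commute srefl_orthogonal_fixed)
  then have "len y \<le> len (y \<circ> srefl \<delta>)"
    using minimal weyl_comp[OF y srefl_in_weyl[OF base_in_roots[OF \<delta>]]] by blast
  then show "y \<delta> \<in> Pos"
    using length_comp_simple_less[OF y \<delta>] by fastforce
qed

lemma vbar_spec:
  assumes \<mu>: "\<mu> \<in> weights R"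
  shows "vbar R B \<mu> \<in> W \<and> vbar R B \<mu> (dom_rep R B \<mu>) = \<mu> \<and>
    (\<forall>w'\<in>W. w' (dom_rep R B \<mu>) = \<mu> \<longrightarrow> len (vbar R B \<mu>) \<le> len w')"
proof -
  let ?\<nu> = "dom_rep R B \<mu>"
  let ?P = "\<lambda>w. w \<in> W \<and> w ?\<nu> = \<mu> \<and> (\<forall>w'\<in>W. w' ?\<nu> = \<mu> \<longrightarrow> len w \<le> len w')"
  obtain x where "x \<in> W" "x \<mu> = ?\<nu>"
    using dom_rep_in_orbit[OF \<mu>] by blast
  then have "inv x \<in> W \<and> inv x ?\<nu> = \<mu>"
    using inv_in_weyl inv_weyl_apply by metis
  then obtain y where y: "?P y"
    using ex_has_least_nat[of "\<lambda>y. y \<in> W \<and> y ?\<nu> = \<mu>" _ len] by blast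
  have "w = y" if "?P w" for w
    using min_coset_rep_unique[OF dom_rep_dominant[OF \<mu>]] min_coset_rep_if_minimal that y
    by (metis (no_types, lifting))
  with y show ?thesis
    unfolding vbar_def by (rule theI)
qed

lemma vbar_in_weyl: "\<mu> \<in> weights R \<Longrightarrow> vbar R B \<mu> \<in> W"
  and vbar_apply: "\<mu> \<in> weights R \<Longrightarrow> vbar R B \<mu> (dom_rep R B \<mu>) = \<mu>"
  and vbar_minimal:
    "\<mu> \<in> weights R \<Longrightarrow> y \<in> W \<Longrightarrow> y (dom_rep R B \<mu>) = \<mu> \<Longrightarrow> len (vbar R B \<mu>) \<le> len y"
  using vbar_spec by blast+

lemma vbar_min_coset_rep: "\<mu> \<in> weights R \<Longrightarrow> min_coset_rep (dom_rep R B \<mu>) (vbar R B \<mu>)"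
  using min_coset_rep_if_minimal vbar_in_weyl vbar_apply vbar_minimal by metis

lemma vbar_eqI:
  assumes "\<mu> \<in> weights R" and "x \<in> W" and "x (dom_rep R B \<mu>) = \<mu>"
    and "min_coset_rep (dom_rep R B \<mu>) x"
  shows "vbar R B \<mu> = x"
  using min_coset_rep_unique[OF dom_rep_dominant vbar_in_weyl] vbar_apply vbar_min_coset_rep assms
  by metis

lemma coord_weyl_apply:
  "x \<in> W \<Longrightarrow> coord \<delta>0 (x \<gamma>) = (\<Sum>\<delta>\<in>B. coord \<delta> \<gamma> * coord \<delta>0 (x \<delta>))"
  using linear_base_expansion[OF linear_weyl, of x \<gamma>] by (simp add: coord_sum coord_scaleR)

lemma support_image_multiple_of_simple:
  assumes x: "x \<in> W" and \<gamma>: "\<gamma> \<in> Pos" and \<delta>: "\<delta> \<in> B" and image: "x \<gamma> = \<delta>"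
    and support: "\<And>\<delta>1. \<delta>1 \<in> B \<Longrightarrow> coord \<delta>1 \<gamma> > 0 \<Longrightarrow> x \<delta>1 \<in> Pos"
    and \<delta>': "\<delta>' \<in> B" "coord \<delta>' \<gamma> > 0"
  shows "x \<delta>' = coord \<delta> (x \<delta>') *\<^sub>R \<delta>"
proof (rule eq_multiple_if_coords_zero[OF \<delta>])
  fix \<delta>0 assume \<delta>0: "\<delta>0 \<in> B" "\<delta>0 \<noteq> \<delta>"
  have nonneg: "coord \<delta>1 \<gamma> * coord \<delta>0 (x \<delta>1) \<ge> 0" if "\<delta>1 \<in> B" for \<delta>1
  proof (cases "coord \<delta>1 \<gamma> > 0")
    case True
    then have "coord \<delta>0 (x \<delta>1) \<ge> 0"
      using support[OF that] \<delta>0(1) by (simp add: pos_roots_iff)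
    with True show ?thesis by simp
  next
    case False
    then have "coord \<delta>1 \<gamma> = 0"
      using \<gamma> that by (force simp: pos_roots_iff)
    then show ?thesis by simp
  qed
  have "(\<Sum>\<delta>1\<in>B. coord \<delta>1 \<gamma> * coord \<delta>0 (x \<delta>1)) = coord \<delta>0 (x \<gamma>)"
    by (rule coord_weyl_apply[OF x, symmetric])
  also have "\<dots> = 0"
    using image \<delta>0 \<delta> by (simp add: coord_base)
  finally have "\<forall>\<delta>1\<in>B. coord \<delta>1 \<gamma> * coord \<delta>0 (x \<delta>1) = 0"
    using sum_nonneg_eq_0_iff[OF finite_base, of "\<lambda>\<delta>1. coord \<delta>1 \<gamma> * coord \<delta>0 (x \<delta>1)"] nonneg
    by simp
  then have "coord \<delta>' \<gamma> * coord \<delta>0 (x \<delta>') = 0"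
    using \<delta>'(1) by blast
  then show "coord \<delta>0 (x \<delta>') = 0"
    using \<delta>'(2) by simp
qed

lemma deodhar_lemma:
  assumes \<nu>: "\<nu> \<in> DW" and v: "v \<in> W" and rep: "min_coset_rep \<nu> v" and \<delta>: "\<delta> \<in> B"
    and longer: "len v < len (srefl \<delta> \<circ> v)" and orth: "\<nu> \<bullet> inv v \<delta> = 0"
  obtains \<delta>' where "\<delta>' \<in> B" and "\<nu> \<bullet> \<delta>' = 0" and "srefl \<delta> \<circ> v = v \<circ> srefl \<delta>'"
proof -
  define \<gamma> where "\<gamma> = inv v \<delta>"
  have \<gamma>: "\<gamma> \<in> Pos"
    using length_simple_comp_greater_iff[OF v \<delta>] longer by (simp add: \<gamma>_def)
  have support_orth: "\<nu> \<bullet> \<delta>1 = 0" if "\<delta>1 \<in> B" "coord \<delta>1 \<gamma> > 0" for \<delta>1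
    using dominant_orthogonal_support[OF \<nu> \<gamma> orth[folded \<gamma>_def] that] .
  then have support_pos: "v \<delta>1 \<in> Pos" if "\<delta>1 \<in> B" "coord \<delta>1 \<gamma> > 0" for \<delta>1
    using rep that by (simp add: min_coset_rep_def)
  obtain \<delta>' where \<delta>': "\<delta>' \<in> B" "coord \<delta>' \<gamma> > 0"
    using pos_root_has_pos_coord[OF \<gamma>] .
  have "v \<delta>' = coord \<delta> (v \<delta>') *\<^sub>R \<delta>"
    using support_image_multiple_of_simple[OF v \<gamma> \<delta> _ support_pos \<delta>'] v by (simp add: \<gamma>_def)
  then have "srefl (v \<delta>') = srefl \<delta>"
    by (rule srefl_root_multiple[OF pos_root_in_roots[OF support_pos[OF \<delta>']]])
  then have "srefl \<delta> \<circ> v = v \<circ> srefl \<delta>'"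
    using comp_srefl_conjugate[OF orthogonal_transformation_weyl[OF v]] by simp
  with \<delta>' support_orth show ?thesis
    using that by blast
qed


section \<open>The order \<open>\<le>\<^sub>\<emptyset>\<close> and simple reflections\<close>

lemma min_coset_rep_simple_comp:
  assumes u: "u \<in> W" and rep: "min_coset_rep \<nu> u" and \<delta>: "\<delta> \<in> B"
    and moved: "srefl \<delta> (u \<nu>) \<noteq> u \<nu>"
  shows "min_coset_rep \<nu> (srefl \<delta> \<circ> u)"
  unfolding min_coset_rep_def
proof (intro ballI impI)
  fix \<delta>' assume \<delta>': "\<delta>' \<in> B" and "\<nu> \<bullet> \<delta>' = 0"
  then have pos: "u \<delta>' \<in> Pos"
    using rep by (simp add: min_coset_rep_def)
  have "\<nexists>c. u \<delta>' = c *\<^sub>R \<delta>"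
  proof
    assume "\<exists>c. u \<delta>' = c *\<^sub>R \<delta>"
    then have "srefl (u \<delta>') = srefl \<delta>"
      using srefl_root_multiple pos_root_in_roots[OF pos] by blast
    then have "srefl \<delta> (u \<nu>) = u (srefl \<delta>' \<nu>)"
      using srefl_conjugate[OF orthogonal_transformation_weyl[OF u]] by simp
    also have "\<dots> = u \<nu>"
      using \<open>\<nu> \<bullet> \<delta>' = 0\<close> by (simp add: srefl_orthogonal_fixed)
    finally show False
      using moved by simp
  qed
  then show "(srefl \<delta> \<circ> u) \<delta>' \<in> Pos"
    using srefl_simple_pos_root[OF pos \<delta>] by simp
qed

text \<open>If \<open>srefl \<delta> \<circ> u\<close> is longer than \<open>u\<close>, lift \<open>u \<le> v\<close> on the left to
  \<open>srefl \<delta> \<circ> u \<le> srefl \<delta> \<circ> v = v \<circ> srefl \<delta>'\<close> (Deodhar) and then on the right back to \<open>v\<close>.\<close>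

lemma bruhat_simple_comp_below:
  assumes \<nu>: "\<nu> \<in> DW" and u: "u \<in> W" and v: "v \<in> W" and le: "bstep\<^sup>*\<^sup>* u v"
    and rep_su: "min_coset_rep \<nu> (srefl \<delta> \<circ> u)" and rep_v: "min_coset_rep \<nu> v"
    and v_minimal: "\<And>y. y \<in> W \<Longrightarrow> y \<nu> = v \<nu> \<Longrightarrow> len v \<le> len y"
    and \<delta>: "\<delta> \<in> B" and fixed: "srefl \<delta> (v \<nu>) = v \<nu>"
  shows "bstep\<^sup>*\<^sup>* (srefl \<delta> \<circ> u) v"
proof -
  have \<delta>R: "\<delta> \<in> R"
    using base_in_roots[OF \<delta>] .
  have su: "srefl \<delta> \<circ> u \<in> W" and sv: "srefl \<delta> \<circ> v \<in> W"
    using weyl_comp srefl_in_weyl[OF \<delta>R] u v by auto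
  show ?thesis
  proof (cases "len (srefl \<delta> \<circ> u) < len u")
    case True
    then have "bstep (srefl \<delta> \<circ> u) u"
      using bruhat_stepI[OF \<delta>R, of "srefl \<delta> \<circ> u"] \<delta>R by simp
    then show ?thesis
      using le by (rule converse_rtranclp_into_rtranclp)
  next
    case False
    have "len v \<le> len (srefl \<delta> \<circ> v)"
      using v_minimal[OF sv] fixed by simp
    then have longer: "len v < len (srefl \<delta> \<circ> v)"
      using length_srefl_comp_neq[OF v \<delta>R] by simp
    then have le': "bstep\<^sup>*\<^sup>* (srefl \<delta> \<circ> u) (srefl \<delta> \<circ> v)"
      using bruhat_simple_comp_lift[OF le u \<delta>] by blast
    have "v \<nu> \<bullet> \<delta> = 0"
      using fixed srefl_fixed_iff[OF base_nonzero[OF \<delta>]] by blast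
    then have "\<nu> \<bullet> inv v \<delta> = 0"
      using inner_weyl_inv[OF v] by simp
    then obtain \<delta>' where \<delta>': "\<delta>' \<in> B" "\<nu> \<bullet> \<delta>' = 0" "srefl \<delta> \<circ> v = v \<circ> srefl \<delta>'"
      using deodhar_lemma[OF \<nu> v rep_v \<delta> longer] by blast
    then have sv_\<delta>': "srefl \<delta> \<circ> v \<circ> srefl \<delta>' = v"
      using base_in_roots[OF \<delta>'(1)] by simp
    have "len (srefl \<delta> \<circ> u) < len (srefl \<delta> \<circ> u \<circ> srefl \<delta>')"
      using length_comp_simple_greater[OF su \<delta>'(1)] rep_su \<delta>' by (simp add: min_coset_rep_def)
    then show ?thesis
      using bruhat_comp_simple_lift[OF le' su \<delta>'(1)] longer sv_\<delta>' by auto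
  qed
qed

lemma bruhat_le_vbar_srefl:
  assumes lam: "lam \<in> weights R" and \<mu>: "\<mu> \<in> weights R" and \<delta>: "\<delta> \<in> B"
    and fixed: "srefl \<delta> lam = lam" and same_orbit: "dom_rep R B \<mu> = dom_rep R B lam"
    and le: "bruhat_le R B (vbar R B \<mu>) (vbar R B lam)"
  shows "bruhat_le R B (vbar R B (srefl \<delta> \<mu>)) (vbar R B lam)"
proof (cases "srefl \<delta> \<mu> = \<mu>")
  case True
  then show ?thesis using le by simp
next
  case False
  define \<nu> u v where "\<nu> = dom_rep R B \<mu>" and "u = vbar R B \<mu>" and "v = vbar R B lam"
  have \<delta>R: "\<delta> \<in> R"
    using base_in_roots[OF \<delta>] .
  have u: "u \<in> W" "u \<nu> = \<mu>" "min_coset_rep \<nu> u"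
    using vbar_in_weyl vbar_apply vbar_min_coset_rep \<mu> by (auto simp: u_def \<nu>_def)
  have v: "v \<in> W" "v \<nu> = lam" "min_coset_rep \<nu> v"
    using vbar_in_weyl vbar_apply vbar_min_coset_rep lam same_orbit by (auto simp: v_def \<nu>_def)
  have rep_su: "min_coset_rep \<nu> (srefl \<delta> \<circ> u)"
    using min_coset_rep_simple_comp[OF u(1,3) \<delta>] u(2) False by simp
  have "vbar R B (srefl \<delta> \<mu>) = srefl \<delta> \<circ> u"
    using vbar_eqI[OF weights_srefl[OF \<mu> \<delta>R] weyl_comp[OF srefl_in_weyl[OF \<delta>R] u(1)]]
      dom_rep_weyl[OF \<mu> srefl_in_weyl[OF \<delta>R]] u(2) rep_su by (simp add: \<nu>_def)
  moreover have "bstep\<^sup>*\<^sup>* (srefl \<delta> \<circ> u) v"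
  proof (rule bruhat_simple_comp_below[OF _ u(1) v(1) _ rep_su v(3) _ \<delta>])
    show "\<nu> \<in> DW"
      using dom_rep_dominant[OF \<mu>] by (simp add: \<nu>_def)
    show "bstep\<^sup>*\<^sup>* u v"
      using le by (simp add: bruhat_le_def u_def v_def)
    show "len v \<le> len y" if "y \<in> W" "y \<nu> = v \<nu>" for y
      using vbar_minimal[OF lam that(1)] that(2) v(2) same_orbit by (simp add: v_def \<nu>_def)
    show "srefl \<delta> (v \<nu>) = v \<nu>"
      using fixed v(2) by simp
  qed
  ultimately show ?thesis
    using weyl_comp[OF srefl_in_weyl[OF \<delta>R] u(1)] v(1) by (simp add: bruhat_le_def v_def)
qed

lemma less_empty_srefl:
  assumes lam: "lam \<in> weights R" and \<mu>: "\<mu> \<in> weights R" and \<delta>: "\<delta> \<in> B"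
    and fixed: "srefl \<delta> lam = lam" and less: "less_empty R B \<mu> lam"
  shows "less_empty R B (srefl \<delta> \<mu>) lam"
proof -
  have \<delta>R: "\<delta> \<in> R"
    using base_in_roots[OF \<delta>] .
  have "srefl \<delta> \<mu> \<noteq> lam"
    using less fixed \<delta>R by (auto simp: less_empty_def)
  moreover have "dom_rep R B (srefl \<delta> \<mu>) = dom_rep R B \<mu>"
    using dom_rep_weyl[OF \<mu> srefl_in_weyl[OF \<delta>R]] .
  ultimately show ?thesis
    using less bruhat_le_vbar_srefl[OF lam \<mu> \<delta> fixed]
    by (auto simp: less_empty_def le_empty_def)
qed


section \<open>Parabolic subgroups\<close>

lemma parabolic_moves_in_span:
  assumes I: "I \<subseteq> S" and x: "x \<in> gen_group I"
  shows "x y - y \<in> span (par_simple B I)"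
  using x
proof (induction x rule: gen_group.induct)
  case gen_id
  then show ?case by (simp add: span_zero)
next
  case (gen_step s x)
  obtain \<alpha> where \<alpha>: "\<alpha> \<in> B" "s = srefl \<alpha>"
    using gen_step.hyps(1) I by (auto simp: simple_refls_def)
  then have "\<alpha> \<in> par_simple B I"
    using gen_step.hyps(1) by (simp add: par_simple_def)
  then have "s (x y) - x y \<in> span (par_simple B I)"
    using \<alpha>(2) by (simp add: srefl_def span_neg span_scale span_base)
  then have "(s (x y) - x y) + (x y - y) \<in> span (par_simple B I)"
    using gen_step.IH by (rule span_add)
  then show ?case by simp
qed

lemma inv_parabolic:
  assumes "I \<subseteq> S" and "w \<in> gen_group I"
  shows "inv w \<in> gen_group I"
proof -
  obtain ss where ss: "set ss \<subseteq> I" "w = comp_list ss"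
    using assms(2) gen_group_iff_comp_list by blast
  then have "inv w = comp_list (rev ss)"
    using inv_comp_list simple_refl_comp_self assms(1) by blast
  then show ?thesis
    using ss(1) gen_group_iff_comp_list by (metis set_rev)
qed

lemma parabolic_left_descent:
  assumes I: "I \<subseteq> S" and w: "w \<in> gen_group I" and "w \<noteq> id"
  obtains \<delta> where "\<delta> \<in> B" and "srefl \<delta> \<in> I" and "inv w \<delta> \<notin> Pos"
proof -
  define v where "v = inv w"
  have w_W: "w \<in> W"
    using gen_group_simple_subset_weyl[OF I] w by blast
  have v: "v \<in> W" "v \<in> gen_group I"
    using inv_in_weyl[OF w_W] inv_parabolic[OF I w] by (simp_all add: v_def)
  have "\<exists>\<delta>\<in>B. srefl \<delta> \<in> I \<and> v \<delta> \<notin> Pos"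
  proof (rule ccontr)
    assume "\<not> ?thesis"
    then have descent: "v \<delta> \<in> Pos" if "\<delta> \<in> par_simple B I" for \<delta>
      using that by (auto simp: par_simple_def)
    have "v \<gamma> \<in> Pos" if \<gamma>: "\<gamma> \<in> Pos" for \<gamma>
    proof (cases "\<exists>\<delta>0\<in>B - par_simple B I. coord \<delta>0 \<gamma> > 0")
      case True
      then obtain \<delta>0 where \<delta>0: "\<delta>0 \<in> B - par_simple B I" "coord \<delta>0 \<gamma> > 0"
        by blast
      have "coord \<delta>0 (v \<gamma> - \<gamma>) = 0"
        using coord_orthogonal_span[OF \<delta>0(1) _ parabolic_moves_in_span[OF I v(2)]]
        by (auto simp: par_simple_def)
      then have "coord \<delta>0 (v \<gamma>) > 0"
        using \<delta>0(2) by (simp add: coord_diff)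
      then show ?thesis
        using pos_root_if_coord_pos weyl_root[OF v(1) pos_root_in_roots[OF \<gamma>]] \<delta>0(1) by blast
    next
      case False
      then show ?thesis
        using weyl_pos_root_if_support_pos[OF v(1) \<gamma>] descent by (auto simp: par_simple_def)
    qed
    then have "v = id"
      by (rule weyl_eq_id_if_pos_roots_preserved[OF v(1)])
    then have "w = id"
      using inv_inv_weyl[OF w_W] by (simp add: v_def)
    with \<open>w \<noteq> id\<close> show False ..
  qed
  then show ?thesis
    using that by (auto simp: v_def)
qed

text \<open>\<open>lam\<close> pairs nonnegatively with the positive roots \<open>\<delta>\<close> and \<open>- inv w \<delta>\<close> of \<open>R\<^sub>I\<close>, and
  these two pairings are opposite because \<open>w lam = lam\<close>.\<close>

lemma parabolic_descent_fixes:
  assumes I: "I \<subseteq> S" and lam: "lam \<in> par_dom_weights R B I"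
    and w: "w \<in> gen_group I" and fixed: "w lam = lam"
    and \<delta>: "\<delta> \<in> B" "srefl \<delta> \<in> I" and descent: "inv w \<delta> \<notin> Pos"
  shows "srefl \<delta> lam = lam"
proof -
  have w_W: "w \<in> W"
    using gen_group_simple_subset_weyl[OF I] w by blast
  have \<delta>R: "\<delta> \<in> R"
    using base_in_roots[OF \<delta>(1)] .
  have \<delta>_span: "\<delta> \<in> span (par_simple B I)"
    using \<delta> by (simp add: par_simple_def span_base)
  have "- inv w \<delta> \<in> Pos"
    using not_pos_root_iff[OF weyl_root[OF inv_in_weyl[OF w_W] \<delta>R]] descent by simp
  moreover have "- inv w \<delta> \<in> span (par_simple B I)"
    using parabolic_moves_in_span[OF I inv_parabolic[OF I w], of \<delta>] \<delta>_span
    by (metis diff_add_cancel span_add span_neg)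
  ultimately have "- inv w \<delta> \<in> par_pos_roots R B I"
    by (simp add: par_pos_roots_def)
  then have "lam \<bullet> (- inv w \<delta>) \<ge> 0"
    using lam unfolding par_dom_weights_def by blast
  moreover have "lam \<bullet> \<delta> \<ge> 0"
    using lam base_pos_root[OF \<delta>(1)] \<delta>_span by (simp add: par_dom_weights_def par_pos_roots_def)
  moreover have "lam \<bullet> \<delta> = lam \<bullet> inv w \<delta>"
    using inner_weyl_inv[OF w_W, of lam \<delta>] fixed by simp
  ultimately have "lam \<bullet> \<delta> = 0"
    by simp
  then show ?thesis
    by (rule srefl_orthogonal_fixed)
qed

lemma less_empty_parabolic_stabilizer:
  assumes I: "I \<subseteq> S" and lam: "lam \<in> par_dom_weights R B I"
    and \<mu>: "\<mu> \<in> weights R" and \<mu>_less: "less_empty R B \<mu> lam"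
  shows "w \<in> gen_group I \<Longrightarrow> w lam = lam \<Longrightarrow> less_empty R B (w \<mu>) lam"
proof (induction "len w" arbitrary: w rule: less_induct)
  case less
  have w_W: "w \<in> W"
    using gen_group_simple_subset_weyl[OF I] less.prems(1) by blast
  show ?case
  proof (cases "w = id")
    case True
    then show ?thesis using \<mu>_less by simp
  next
    case False
    then obtain \<delta> where \<delta>: "\<delta> \<in> B" "srefl \<delta> \<in> I" and descent: "inv w \<delta> \<notin> Pos"
      using parabolic_left_descent[OF I less.prems(1)] by blast
    define w' where "w' = srefl \<delta> \<circ> w"
    have fixed: "srefl \<delta> lam = lam"
      using parabolic_descent_fixes[OF I lam less.prems \<delta> descent] .
    have w': "w' \<in> gen_group I" "w' lam = lam" "len w' < len w"
      using gen_group.gen_step[OF \<delta>(2) less.prems(1)] less.prems(2) fixed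
        length_simple_comp_less_iff[OF w_W \<delta>(1)] descent by (simp_all add: w'_def)
    then have "less_empty R B (srefl \<delta> (w' \<mu>)) lam"
      using less_empty_srefl[OF _ weyl_weights[OF _ \<mu>] \<delta>(1) fixed] less.hyps lam
        gen_group_simple_subset_weyl[OF I] by (auto simp: par_dom_weights_def)
    then show ?thesis
      using base_in_roots[OF \<delta>(1)] by (simp add: w'_def)
  qed
qed

end

theorem mainTheorem4:
  fixes R B :: "'a::euclidean_space set" and I :: "('a \<Rightarrow> 'a) set"
    and lam \<mu> :: 'a and w :: "'a \<Rightarrow> 'a"
  assumes "root_system R" and "is_base R B"
    and "I \<subseteq> simple_refls B"
    and "lam \<in> par_dom_weights R B I" and "\<mu> \<in> weights R"
    and "less_empty R B \<mu> lam"
    and "w \<in> par_stab I lam"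
  shows "less_empty R B (w \<mu>) lam"
proof -
  interpret based_root_system R B
    using assms(1,2) by (rule based_root_system.intro)
  show ?thesis
    using less_empty_parabolic_stabilizer[OF assms(3-6)] assms(7) by (simp add: par_stab_def)
qed

end
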